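(* Let $\mathbb{A}$ be a 2-category and $(\mathfrak{l}\dashv\mathfrak{p},\varepsilon,\eta):\mathfrak{b}\to\mathfrak{e}$ an adjunction in $\mathbb{A}$ (so $\mathfrak{l}:\mathfrak{b}\to\mathfrak{e}$, $\mathfrak{p}:\mathfrak{e}\to\mathfrak{b}$). Then: (1) if $\mathbb{A}$ has the two-dimensional cokernel diagram of $\mathfrak{p}$, the semantic lax descent factorization of $\mathfrak{p}$ is isomorphic to the usual factorization of $\mathfrak{p}$ through the Eilenberg–Moore object of the monad $(\mathfrak{b},\mathfrak{p}\mathfrak{l},\mathrm{id}_{\mathfrak{p}}\ast\varepsilon\ast\mathrm{id}_{\mathfrak{l}},\eta)$, either one existing if the other does; (2) if $\mathbb{A}$ has the two-dimensional kernel diagram of $\mathfrak{l}$, the semantic lax codescent factorization of $\mathfrak{l}$ is isomorphic to the usual factorization of $\mathfrak{l}$ through the Kleisli object of that monad, either one existing if the other does; (3) if $\mathbb{A}$ has the two-dimensional cokernel diagram of $\mathfrak{l}$, the semantic lax descent factorization of $\mathfrak{l}$ is isomorphic to the usual factorization of $\mathfrak{l}$ through the co-Eilenberg–Moore object of the comonad $(\mathfrak{e},\mathfrak{l}\mathfrak{p},\mathrm{id}_{\mathfrak{l}}\ast\eta\ast\mathrm{id}_{\mathfrak{p}},\varepsilon)$, either one existing if the other does; (4) if $\mathbb{A}$ has the two-dimensional kernel diagram of $\mathfrak{p}$, the semantic lax codescent factorization of $\mathfrak{p}$ is isomorphic to the usual factorization of $\mathfrak{p}$ through the co-Kleisli object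 of that comonad, either one existing if the other does.
   Context: A 2-category is a $\mathbf{Cat}$-enriched category; composition of 1-cells is juxtaposition, vertical composition of 2-cells is $\cdot$, horizontal composition is $\ast$, $\mathrm{id}_f$ is the identity 2-cell on $f$. An adjunction $(\mathfrak{l}\dashv\mathfrak{p},\varepsilon:\mathfrak{l}\mathfrak{p}\Rightarrow\mathrm{id}_{\mathfrak{e}},\eta:\mathrm{id}_{\mathfrak{b}}\Rightarrow\mathfrak{p}\mathfrak{l})$ satisfies the triangle identities. $\mathbb{A}^{\mathrm{op}}$, $\mathbb{A}^{\mathrm{co}}$, $\mathbb{A}^{\mathrm{coop}}$ are obtained from $\mathbb{A}$ by reversing 1-cells, 2-cells, or both. For a 1-cell $p:e\to b$: an opcomma object of $p$ along itself is $b\uparrow_p b$ with $\delta^0,\delta^1:b\to b\uparrow_pb$ and $\alpha:\delta^1p\Rightarrow\delta^0p$ such that for every $y$, $h\mapsto(h\delta^0,h\delta^1,\mathrm{id}_h\ast\alpha)$, $\xi\mapsto(\xi\ast\mathrm{id}_{\delta^0},\xi\ast\mathrm{id}_{\delta^1})$ is an isomorphism from $\mathbb{A}(b\uparrow_pb,y)$ onto the category of triples $(h_0,h_1:b\to y,\beta:h_1p\Rightarrow h_0p)$ with morphisms pairs $(\xi_0,\xi_1)$ with $(\xi_0\ast\mathrm{id}_p)\cdot\beta=\beta'\cdot(\xi_1\ast\mathrm{id}_p)$. A two-dimensional pushout of a span $f_0:c\to c_0$, $f_1:c\to c_1$ is $P$ with $q_0,q_1$, $q_0f_0=q_1f_1$,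 such that $k\mapsto(kq_0,kq_1)$ is an isomorphism from $\mathbb{A}(P,y)$ onto the category of pairs $(k_0,k_1)$ with $k_0f_0=k_1f_1$ and morphisms pairs of 2-cells $(\xi_0,\xi_1)$ with $\xi_0\ast\mathrm{id}_{f_0}=\xi_1\ast\mathrm{id}_{f_1}$. $\mathbb{A}$ has the two-dimensional cokernel diagram of $p$ if it has $b\uparrow_pb$ and a two-dimensional pushout $b\uparrow_pb\uparrow_pb$ of $(\delta^0,\delta^1)$ with $D^0,D^2$, $D^2\delta^0=D^0\delta^1$; $D^1$ is the unique 1-cell with $D^1\delta^1=D^2\delta^1$, $D^1\delta^0=D^0\delta^0$, $\mathrm{id}_{D^1}\ast\alpha=(\mathrm{id}_{D^0}\ast\alpha)\cdot(\mathrm{id}_{D^2}\ast\alpha)$; $s^0$ is the unique 1-cell with $s^0\delta^0=s^0\delta^1=\mathrm{id}_b$, $\mathrm{id}_{s^0}\ast\alpha=\mathrm{id}_p$. Semantic lax descent factorization of $p$: $\mathrm{Desc}_p(y)$ has objects $(h:y\to b,\beta:\delta^1h\Rightarrow\delta^0h)$ with $(\mathrm{id}_{D^0}\ast\beta)\cdot(\mathrm{id}_{D^2}\ast\beta)=\mathrm{id}_{D^1}\ast\beta$, $\mathrm{id}_{s^0}\ast\beta=\mathrm{id}_h$, and morphisms 2-cells $\xi:h_1\Rightarrow h_0$ with $\beta_0\cdot(\mathrm{id}_{\delta^1}\ast\xi)=(\mathrm{id}_{\delta^0}\ast\xi)\cdot\beta_1$; a lax descent object is $L$ with $d:L\to b$,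 $\Psi:\delta^1d\Rightarrow\delta^0d$ such that $g\mapsto(dg,\Psi\ast\mathrm{id}_g)$, $\xi\mapsto\mathrm{id}_d\ast\xi$ is an isomorphism $\mathbb{A}(y,L)\cong\mathrm{Desc}_p(y)$ for all $y$; the factorization is $p=d\,p^H$ with $p^H$ unique such that $dp^H=p$ and $\Psi\ast\mathrm{id}_{p^H}=\alpha$. An Eilenberg–Moore object of a monad $(b,t,m,\eta)$ is $b^{\mathsf{T}}$ with $u:b^{\mathsf{T}}\to b$, $\mu:tu\Rightarrow u$ such that $g\mapsto(ug,\mu\ast\mathrm{id}_g)$ is an isomorphism from $\mathbb{A}(y,b^{\mathsf{T}})$ onto the category of pairs $(h,\beta:th\Rightarrow h)$ with $\beta\cdot(\mathrm{id}_t\ast\beta)=\beta\cdot(m\ast\mathrm{id}_h)$, $\beta\cdot(\eta\ast\mathrm{id}_h)=\mathrm{id}_h$ (morphisms $\xi$ with $\xi\cdot\beta_1=\beta_0\cdot(\mathrm{id}_t\ast\xi)$). The usual factorization of the right adjoint $\mathfrak{p}$ through the Eilenberg–Moore object of the induced monad is $\mathfrak{p}=u\,k$ with $k:\mathfrak{e}\to\mathfrak{b}^{\mathsf{T}}$ unique such that $uk=\mathfrak{p}$ and $\mu\ast\mathrm{id}_k=\mathrm{id}_{\mathfrak{p}}\ast\varepsilon$. Duals: the two-dimensional kernel diagram of a 1-cell in $\mathbb{A}$ is its two-dimensional cokernel diagram in $\mathbb{A}^{\mathrm{op}}$, and its semantic lax codescent factorization is its semantic lax descent factorization in $\mathbb{A}^{\mathrm{op}}$.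 The usual factorization of $\mathfrak{l}$ through the Kleisli object, of $\mathfrak{l}$ through the co-Eilenberg–Moore object, and of $\mathfrak{p}$ through the co-Kleisli object are respectively the usual Eilenberg–Moore factorization of the right adjoint $\mathfrak{l}$ in $\mathbb{A}^{\mathrm{op}}$, of the right adjoint $\mathfrak{l}$ in $\mathbb{A}^{\mathrm{co}}$, and of the right adjoint $\mathfrak{p}$ in $\mathbb{A}^{\mathrm{coop}}$. Two factorizations $f=ac$ (through $X$) and $f=a'c'$ (through $X'$) are isomorphic if there is an isomorphism $\varphi:X\to X'$ with $a'\varphi=a$ and $\varphi c=c'$. *)

theory Defs
  imports Main
begin

section \<open>Strict 2-categories (Cat-enriched categories)\<close>

text \<open>
  Objects of type 'o, 1-cells of type 'a, 2-cells of type 'c.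
  cmp g f is the composite "g f" (f first); vc beta alpha is the vertical composite
  beta . alpha (alpha first); hc beta alpha is the horizontal composite beta * alpha,
  where for alpha : f => f' and beta : g => g' one has beta * alpha : g f => g' f'.
  id2 f is the identity 2-cell on the 1-cell f.
\<close>

record ('o, 'a, 'c) twocat =
  Ob  :: "'o set"
  Ar  :: "'a set"
  Cl  :: "'c set"
  dm  :: "'a \<Rightarrow> 'o"
  cd  :: "'a \<Rightarrow> 'o"
  cmp :: "'a \<Rightarrow> 'a \<Rightarrow> 'a"
  idn :: "'o \<Rightarrow> 'a"
  s2  :: "'c \<Rightarrow> 'a"
  t2  :: "'c \<Rightarrow> 'a"
  vc  :: "'c \<Rightarrow> 'c \<Rightarrow> 'c"
  hc  :: "'c \<Rightarrow> 'c \<Rightarrow> 'c"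
  id2 :: "'a \<Rightarrow> 'c"

definition hom :: "('o, 'a, 'c) twocat \<Rightarrow> 'o \<Rightarrow> 'o \<Rightarrow> 'a set" where
  "hom A x y = {f \<in> Ar A. dm A f = x \<and> cd A f = y}"

definition cells :: "('o, 'a, 'c) twocat \<Rightarrow> 'a \<Rightarrow> 'a \<Rightarrow> 'c set" where
  "cells A f g = {\<alpha> \<in> Cl A. s2 A \<alpha> = f \<and> t2 A \<alpha> = g}"

definition twocat :: "('o, 'a, 'c) twocat \<Rightarrow> bool" where
  "twocat A \<longleftrightarrow>
     (\<forall>f \<in> Ar A. dm A f \<in> Ob A \<and> cd A f \<in> Ob A)
   \<and> (\<forall>x \<in> Ob A. idn A x \<in> hom A x x)
   \<and> (\<forall>f \<in> Ar A. \<forall>g \<in> Ar A. dm A g = cd A f \<longrightarrow> cmp A g f \<in> hom A (dm A f) (cd A g))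
   \<and> (\<forall>f \<in> Ar A. \<forall>g \<in> Ar A. \<forall>h \<in> Ar A. dm A g = cd A f \<and> dm A h = cd A g \<longrightarrow>
        cmp A h (cmp A g f) = cmp A (cmp A h g) f)
   \<and> (\<forall>f \<in> Ar A. cmp A (idn A (cd A f)) f = f \<and> cmp A f (idn A (dm A f)) = f)
   \<and> (\<forall>\<alpha> \<in> Cl A. s2 A \<alpha> \<in> Ar A \<and> t2 A \<alpha> \<in> Ar A
        \<and> dm A (s2 A \<alpha>) = dm A (t2 A \<alpha>) \<and> cd A (s2 A \<alpha>) = cd A (t2 A \<alpha>))
   \<and> (\<forall>f \<in> Ar A. id2 A f \<in> cells A f f)
   \<and> (\<forall>\<alpha> \<in> Cl A. \<forall>\<beta> \<in> Cl A. s2 A \<beta> = t2 A \<alpha> \<longrightarrow> vc A \<beta> \<alpha> \<in> cells A (s2 A \<alpha>) (t2 A \<beta>))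
   \<and> (\<forall>\<alpha> \<in> Cl A. \<forall>\<beta> \<in> Cl A. \<forall>\<gamma> \<in> Cl A. s2 A \<beta> = t2 A \<alpha> \<and> s2 A \<gamma> = t2 A \<beta> \<longrightarrow>
        vc A \<gamma> (vc A \<beta> \<alpha>) = vc A (vc A \<gamma> \<beta>) \<alpha>)
   \<and> (\<forall>\<alpha> \<in> Cl A. vc A (id2 A (t2 A \<alpha>)) \<alpha> = \<alpha> \<and> vc A \<alpha> (id2 A (s2 A \<alpha>)) = \<alpha>)
   \<and> (\<forall>\<alpha> \<in> Cl A. \<forall>\<beta> \<in> Cl A. dm A (s2 A \<beta>) = cd A (s2 A \<alpha>) \<longrightarrow>
        hc A \<beta> \<alpha> \<in> cells A (cmp A (s2 A \<beta>) (s2 A \<alpha>)) (cmp A (t2 A \<beta>) (t2 A \<alpha>)))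
   \<and> (\<forall>\<alpha> \<in> Cl A. \<forall>\<beta> \<in> Cl A. \<forall>\<gamma> \<in> Cl A.
        dm A (s2 A \<beta>) = cd A (s2 A \<alpha>) \<and> dm A (s2 A \<gamma>) = cd A (s2 A \<beta>) \<longrightarrow>
        hc A \<gamma> (hc A \<beta> \<alpha>) = hc A (hc A \<gamma> \<beta>) \<alpha>)
   \<and> (\<forall>\<alpha> \<in> Cl A. hc A (id2 A (idn A (cd A (s2 A \<alpha>)))) \<alpha> = \<alpha>
        \<and> hc A \<alpha> (id2 A (idn A (dm A (s2 A \<alpha>)))) = \<alpha>)
   \<and> (\<forall>f \<in> Ar A. \<forall>g \<in> Ar A. dm A g = cd A f \<longrightarrow>
        hc A (id2 A g) (id2 A f) = id2 A (cmp A g f))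
   \<and> (\<forall>\<alpha> \<in> Cl A. \<forall>\<alpha>' \<in> Cl A. \<forall>\<beta> \<in> Cl A. \<forall>\<beta>' \<in> Cl A.
        s2 A \<alpha>' = t2 A \<alpha> \<and> s2 A \<beta>' = t2 A \<beta> \<and> dm A (s2 A \<beta>) = cd A (s2 A \<alpha>) \<longrightarrow>
        hc A (vc A \<beta>' \<beta>) (vc A \<alpha>' \<alpha>) = vc A (hc A \<beta>' \<alpha>') (hc A \<beta> \<alpha>))"

definition op2 :: "('o, 'a, 'c) twocat \<Rightarrow> ('o, 'a, 'c) twocat" where
  "op2 A = A\<lparr>dm := cd A, cd := dm A, cmp := (\<lambda>g f. cmp A f g),
             hc := (\<lambda>\<beta> \<alpha>. hc A \<alpha> \<beta>)\<rparr>"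

definition co2 :: "('o, 'a, 'c) twocat \<Rightarrow> ('o, 'a, 'c) twocat" where
  "co2 A = A\<lparr>s2 := t2 A, t2 := s2 A, vc := (\<lambda>\<beta> \<alpha>. vc A \<alpha> \<beta>)\<rparr>"

definition coop2 :: "('o, 'a, 'c) twocat \<Rightarrow> ('o, 'a, 'c) twocat" where
  "coop2 A = op2 (co2 A)"

text \<open>Given categories (O1,H1,c1,i1) and (O2,H2,c2,i2), where H x x' is the set of
  morphisms x -> x', c m' m is "m' after m" and i x the identity, the assignment
  (F on objects, G on morphisms) is a functor that is an isomorphism of categories.\<close>
definition cat_iso ::
  "'x set \<Rightarrow> ('x \<Rightarrow> 'x \<Rightarrow> 'm set) \<Rightarrow> ('m \<Rightarrow> 'm \<Rightarrow> 'm) \<Rightarrow> ('x \<Rightarrow> 'm) \<Rightarrow>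
   'y set \<Rightarrow> ('y \<Rightarrow> 'y \<Rightarrow> 'n set) \<Rightarrow> ('n \<Rightarrow> 'n \<Rightarrow> 'n) \<Rightarrow> ('y \<Rightarrow> 'n) \<Rightarrow>
   ('x \<Rightarrow> 'y) \<Rightarrow> ('m \<Rightarrow> 'n) \<Rightarrow> bool" where
  "cat_iso O1 H1 c1 i1 O2 H2 c2 i2 F G \<longleftrightarrow>
     bij_betw F O1 O2
   \<and> (\<forall>x \<in> O1. \<forall>x' \<in> O1. bij_betw G (H1 x x') (H2 (F x) (F x')))
   \<and> (\<forall>x \<in> O1. G (i1 x) = i2 (F x))
   \<and> (\<forall>x \<in> O1. \<forall>x' \<in> O1. \<forall>x'' \<in> O1. \<forall>m \<in> H1 x x'. \<forall>m' \<in> H1 x' x''.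
        G (c1 m' m) = c2 (G m') (G m))"

definition is_adjunction ::
  "('o, 'a, 'c) twocat \<Rightarrow> 'o \<Rightarrow> 'o \<Rightarrow> 'a \<Rightarrow> 'a \<Rightarrow> 'c \<Rightarrow> 'c \<Rightarrow> bool" where
  "is_adjunction A b e l p \<epsilon> \<eta> \<longleftrightarrow>
     b \<in> Ob A \<and> e \<in> Ob A \<and> l \<in> hom A b e \<and> p \<in> hom A e b
   \<and> \<epsilon> \<in> cells A (cmp A l p) (idn A e) \<and> \<eta> \<in> cells A (idn A b) (cmp A p l)
   \<and> vc A (hc A \<epsilon> (id2 A l)) (hc A (id2 A l) \<eta>) = id2 A l
   \<and> vc A (hc A (id2 A p) \<epsilon>) (hc A \<eta> (id2 A p)) = id2 A p"

definition oc_obj :: "('o, 'a, 'c) twocat \<Rightarrow> 'a \<Rightarrow> 'o \<Rightarrow> ('a \<times> 'a \<times> 'c) set" where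
  "oc_obj A p y = {(h0, h1, \<beta>). h0 \<in> hom A (cd A p) y \<and> h1 \<in> hom A (cd A p) y
                     \<and> \<beta> \<in> cells A (cmp A h1 p) (cmp A h0 p)}"

definition oc_hom :: "('o, 'a, 'c) twocat \<Rightarrow> 'a \<Rightarrow> ('a \<times> 'a \<times> 'c) \<Rightarrow> ('a \<times> 'a \<times> 'c) \<Rightarrow> ('c \<times> 'c) set" where
  "oc_hom A p X X' = (case X of (h0, h1, \<beta>) \<Rightarrow> case X' of (h0', h1', \<beta>') \<Rightarrow>
     {(\<xi>0, \<xi>1). \<xi>0 \<in> cells A h0 h0' \<and> \<xi>1 \<in> cells A h1 h1'
        \<and> vc A (hc A \<xi>0 (id2 A p)) \<beta> = vc A \<beta>' (hc A \<xi>1 (id2 A p))})"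

definition pair_vc :: "('o, 'a, 'c) twocat \<Rightarrow> ('c \<times> 'c) \<Rightarrow> ('c \<times> 'c) \<Rightarrow> ('c \<times> 'c)" where
  "pair_vc A m' m = (vc A (fst m') (fst m), vc A (snd m') (snd m))"

definition is_opcomma :: "('o, 'a, 'c) twocat \<Rightarrow> 'a \<Rightarrow> 'o \<Rightarrow> 'a \<Rightarrow> 'a \<Rightarrow> 'c \<Rightarrow> bool" where
  "is_opcomma A p C \<delta>0 \<delta>1 \<alpha> \<longleftrightarrow>
     p \<in> Ar A \<and> C \<in> Ob A \<and> \<delta>0 \<in> hom A (cd A p) C \<and> \<delta>1 \<in> hom A (cd A p) C
   \<and> \<alpha> \<in> cells A (cmp A \<delta>1 p) (cmp A \<delta>0 p)
   \<and> (\<forall>y \<in> Ob A. cat_iso (hom A C y) (cells A) (vc A) (id2 A)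
        (oc_obj A p y) (oc_hom A p) (pair_vc A) (\<lambda>(h0, h1, \<beta>). (id2 A h0, id2 A h1))
        (\<lambda>h. (cmp A h \<delta>0, cmp A h \<delta>1, hc A (id2 A h) \<alpha>))
        (\<lambda>\<xi>. (hc A \<xi> (id2 A \<delta>0), hc A \<xi> (id2 A \<delta>1))))"

definition po_obj :: "('o, 'a, 'c) twocat \<Rightarrow> 'a \<Rightarrow> 'a \<Rightarrow> 'o \<Rightarrow> ('a \<times> 'a) set" where
  "po_obj A f0 f1 y = {(k0, k1). k0 \<in> hom A (cd A f0) y \<and> k1 \<in> hom A (cd A f1) y
                          \<and> cmp A k0 f0 = cmp A k1 f1}"

definition po_hom :: "('o, 'a, 'c) twocat \<Rightarrow> 'a \<Rightarrow> 'a \<Rightarrow> ('a \<times> 'a) \<Rightarrow> ('a \<times> 'a) \<Rightarrow> ('c \<times> 'c) set" where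
  "po_hom A f0 f1 K K' = (case K of (k0, k1) \<Rightarrow> case K' of (k0', k1') \<Rightarrow>
     {(\<xi>0, \<xi>1). \<xi>0 \<in> cells A k0 k0' \<and> \<xi>1 \<in> cells A k1 k1'
        \<and> hc A \<xi>0 (id2 A f0) = hc A \<xi>1 (id2 A f1)})"

definition is_pushout2 :: "('o, 'a, 'c) twocat \<Rightarrow> 'a \<Rightarrow> 'a \<Rightarrow> 'o \<Rightarrow> 'a \<Rightarrow> 'a \<Rightarrow> bool" where
  "is_pushout2 A f0 f1 P q0 q1 \<longleftrightarrow>
     f0 \<in> Ar A \<and> f1 \<in> Ar A \<and> dm A f0 = dm A f1 \<and> P \<in> Ob A
   \<and> q0 \<in> hom A (cd A f0) P \<and> q1 \<in> hom A (cd A f1) P \<and> cmp A q0 f0 = cmp A q1 f1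
   \<and> (\<forall>y \<in> Ob A. cat_iso (hom A P y) (cells A) (vc A) (id2 A)
        (po_obj A f0 f1 y) (po_hom A f0 f1) (pair_vc A) (\<lambda>(k0, k1). (id2 A k0, id2 A k1))
        (\<lambda>k. (cmp A k q0, cmp A k q1))
        (\<lambda>\<xi>. (hc A \<xi> (id2 A q0), hc A \<xi> (id2 A q1))))"

record ('o, 'a, 'c) ckdiag =
  ck_C  :: 'o
  ck_d0 :: 'a
  ck_d1 :: 'a
  ck_al :: 'c
  ck_P  :: 'o
  ck_D0 :: 'a
  ck_D1 :: 'a
  ck_D2 :: 'a
  ck_s0 :: 'a

definition is_cokernel_diagram :: "('o, 'a, 'c) twocat \<Rightarrow> 'a \<Rightarrow> ('o, 'a, 'c) ckdiag \<Rightarrow> bool" where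
  "is_cokernel_diagram A p K \<longleftrightarrow>
     is_opcomma A p (ck_C K) (ck_d0 K) (ck_d1 K) (ck_al K)
   \<and> is_pushout2 A (ck_d0 K) (ck_d1 K) (ck_P K) (ck_D2 K) (ck_D0 K)
   \<and> ck_D1 K \<in> hom A (ck_C K) (ck_P K)
   \<and> cmp A (ck_D1 K) (ck_d1 K) = cmp A (ck_D2 K) (ck_d1 K)
   \<and> cmp A (ck_D1 K) (ck_d0 K) = cmp A (ck_D0 K) (ck_d0 K)
   \<and> hc A (id2 A (ck_D1 K)) (ck_al K)
       = vc A (hc A (id2 A (ck_D0 K)) (ck_al K)) (hc A (id2 A (ck_D2 K)) (ck_al K))
   \<and> ck_s0 K \<in> hom A (ck_C K) (cd A p)
   \<and> cmp A (ck_s0 K) (ck_d0 K) = idn A (cd A p)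
   \<and> cmp A (ck_s0 K) (ck_d1 K) = idn A (cd A p)
   \<and> hc A (id2 A (ck_s0 K)) (ck_al K) = id2 A p"

definition desc_obj :: "('o, 'a, 'c) twocat \<Rightarrow> 'a \<Rightarrow> ('o, 'a, 'c) ckdiag \<Rightarrow> 'o \<Rightarrow> ('a \<times> 'c) set" where
  "desc_obj A p K y = {(h, \<beta>). h \<in> hom A y (cd A p)
      \<and> \<beta> \<in> cells A (cmp A (ck_d1 K) h) (cmp A (ck_d0 K) h)
      \<and> vc A (hc A (id2 A (ck_D0 K)) \<beta>) (hc A (id2 A (ck_D2 K)) \<beta>) = hc A (id2 A (ck_D1 K)) \<beta>
      \<and> hc A (id2 A (ck_s0 K)) \<beta> = id2 A h}"

definition desc_hom :: "('o, 'a, 'c) twocat \<Rightarrow> ('o, 'a, 'c) ckdiag \<Rightarrow> ('a \<times> 'c) \<Rightarrow> ('a \<times> 'c) \<Rightarrow> 'c set" where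
  "desc_hom A K X1 X0 = (case X1 of (h1, \<beta>1) \<Rightarrow> case X0 of (h0, \<beta>0) \<Rightarrow>
     {\<xi> \<in> cells A h1 h0. vc A \<beta>0 (hc A (id2 A (ck_d1 K)) \<xi>) = vc A (hc A (id2 A (ck_d0 K)) \<xi>) \<beta>1})"

definition is_lax_descent_object ::
  "('o, 'a, 'c) twocat \<Rightarrow> 'a \<Rightarrow> ('o, 'a, 'c) ckdiag \<Rightarrow> 'o \<Rightarrow> 'a \<Rightarrow> 'c \<Rightarrow> bool" where
  "is_lax_descent_object A p K L d \<Psi> \<longleftrightarrow>
     L \<in> Ob A \<and> d \<in> hom A L (cd A p)
   \<and> \<Psi> \<in> cells A (cmp A (ck_d1 K) d) (cmp A (ck_d0 K) d)
   \<and> (\<forall>y \<in> Ob A. cat_iso (hom A y L) (cells A) (vc A) (id2 A)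
        (desc_obj A p K y) (desc_hom A K) (vc A) (\<lambda>(h, \<beta>). id2 A h)
        (\<lambda>g. (cmp A d g, hc A \<Psi> (id2 A g)))
        (\<lambda>\<xi>. hc A (id2 A d) \<xi>))"

definition is_lax_descent_factorization ::
  "('o, 'a, 'c) twocat \<Rightarrow> 'a \<Rightarrow> ('o, 'a, 'c) ckdiag \<Rightarrow> 'o \<Rightarrow> 'a \<Rightarrow> 'c \<Rightarrow> 'a \<Rightarrow> bool" where
  "is_lax_descent_factorization A p K L d \<Psi> pH \<longleftrightarrow>
     is_lax_descent_object A p K L d \<Psi>
   \<and> pH \<in> hom A (dm A p) L \<and> cmp A d pH = p \<and> hc A \<Psi> (id2 A pH) = ck_al K"

definition em_obj :: "('o, 'a, 'c) twocat \<Rightarrow> 'a \<Rightarrow> 'c \<Rightarrow> 'c \<Rightarrow> 'o \<Rightarrow> ('a \<times> 'c) set" where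
  "em_obj A t m \<eta> y = {(h, \<beta>). h \<in> hom A y (dm A t) \<and> \<beta> \<in> cells A (cmp A t h) h
      \<and> vc A \<beta> (hc A (id2 A t) \<beta>) = vc A \<beta> (hc A m (id2 A h))
      \<and> vc A \<beta> (hc A \<eta> (id2 A h)) = id2 A h}"

definition em_hom :: "('o, 'a, 'c) twocat \<Rightarrow> 'a \<Rightarrow> ('a \<times> 'c) \<Rightarrow> ('a \<times> 'c) \<Rightarrow> 'c set" where
  "em_hom A t X1 X0 = (case X1 of (h1, \<beta>1) \<Rightarrow> case X0 of (h0, \<beta>0) \<Rightarrow>
     {\<xi> \<in> cells A h1 h0. vc A \<xi> \<beta>1 = vc A \<beta>0 (hc A (id2 A t) \<xi>)})"

definition is_EM_object ::
  "('o, 'a, 'c) twocat \<Rightarrow> 'a \<Rightarrow> 'c \<Rightarrow> 'c \<Rightarrow> 'o \<Rightarrow> 'a \<Rightarrow> 'c \<Rightarrow> bool" where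
  "is_EM_object A t m \<eta> X u \<mu> \<longleftrightarrow>
     X \<in> Ob A \<and> u \<in> hom A X (dm A t) \<and> \<mu> \<in> cells A (cmp A t u) u
   \<and> (\<forall>y \<in> Ob A. cat_iso (hom A y X) (cells A) (vc A) (id2 A)
        (em_obj A t m \<eta> y) (em_hom A t) (vc A) (\<lambda>(h, \<beta>). id2 A h)
        (\<lambda>g. (cmp A u g, hc A \<mu> (id2 A g)))
        (\<lambda>\<xi>. hc A (id2 A u) \<xi>))"

definition is_EM_factorization ::
  "('o, 'a, 'c) twocat \<Rightarrow> 'a \<Rightarrow> 'a \<Rightarrow> 'c \<Rightarrow> 'c \<Rightarrow> 'o \<Rightarrow> 'a \<Rightarrow> 'c \<Rightarrow> 'a \<Rightarrow> bool" where
  "is_EM_factorization A l p \<epsilon> \<eta> X u \<mu> k \<longleftrightarrow>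
     is_EM_object A (cmp A p l) (hc A (hc A (id2 A p) \<epsilon>) (id2 A l)) \<eta> X u \<mu>
   \<and> k \<in> hom A (dm A p) X \<and> cmp A u k = p \<and> hc A \<mu> (id2 A k) = hc A (id2 A p) \<epsilon>"

definition iso_factorizations ::
  "('o, 'a, 'c) twocat \<Rightarrow> 'o \<Rightarrow> 'a \<Rightarrow> 'a \<Rightarrow> 'o \<Rightarrow> 'a \<Rightarrow> 'a \<Rightarrow> bool" where
  "iso_factorizations A X a c X' a' c' \<longleftrightarrow>
     (\<exists>\<phi> \<in> hom A X X'. (\<exists>\<psi> \<in> hom A X' X. cmp A \<psi> \<phi> = idn A X \<and> cmp A \<phi> \<psi> = idn A X')
        \<and> cmp A a' \<phi> = a \<and> cmp A \<phi> c = c')"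

text \<open>"The semantic lax descent factorization of p (computed in Bd w.r.t. the cokernel
  diagram K) is isomorphic to the usual Eilenberg--Moore factorization of the right adjoint p
  of the adjunction (l -| p, eps, eta) in Bm, either one existing if the other does."\<close>
definition desc_EM_agree ::
  "('o, 'a, 'c) twocat \<Rightarrow> ('o, 'a, 'c) twocat \<Rightarrow> 'a \<Rightarrow> 'a \<Rightarrow> 'c \<Rightarrow> 'c \<Rightarrow> ('o, 'a, 'c) ckdiag \<Rightarrow> bool" where
  "desc_EM_agree Bd Bm l p \<epsilon> \<eta> K \<longleftrightarrow>
     ((\<exists>L d \<Psi> pH. is_lax_descent_factorization Bd p K L d \<Psi> pH)
        \<longleftrightarrow> (\<exists>X u \<mu> k. is_EM_factorization Bm l p \<epsilon> \<eta> X u \<mu> k))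
   \<and> (\<forall>L d \<Psi> pH X u \<mu> k. is_lax_descent_factorization Bd p K L d \<Psi> pH \<longrightarrow>
        is_EM_factorization Bm l p \<epsilon> \<eta> X u \<mu> k \<longrightarrow> iso_factorizations Bd L d pH X u k)"

end

theory Submission
  imports Defs
begin

text \<open>
  Write \<open>\<delta>\<^sub>0, \<delta>\<^sub>1 : b \<rightarrow> C\<close> and \<open>\<alpha> : \<delta>\<^sub>1 p \<Rightarrow> \<delta>\<^sub>0 p\<close> for the opcomma object of the
  right adjoint \<open>p\<close>. Its universal property yields \<open>r : C \<rightarrow> b\<close> classifying the triple
  \<open>(id\<^sub>b, p l, p \<epsilon>)\<close>; let \<open>\<alpha>' = (\<alpha> l) \<cdot> (\<delta>\<^sub>1 \<eta>) : \<delta>\<^sub>1 \<Rightarrow> \<delta>\<^sub>0 p l\<close> be the mate of \<open>\<alpha>\<close>. Using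
  the pushout \<open>P\<close> one finds a retraction \<open>Q\<close> of \<open>D\<^sub>1\<close>, and the cocycle condition of a descent
  datum \<open>(h, \<gamma>)\<close>, whiskered by \<open>Q\<close>, gives the decomposition \<open>\<gamma> = (\<delta>\<^sub>0 r \<gamma>) \<cdot> (\<alpha>' h)\<close>.
  Hence \<open>(h, \<gamma>) \<mapsto> (h, r \<gamma>)\<close> and \<open>(h, \<beta>) \<mapsto> (h, (\<delta>\<^sub>0 \<beta>) \<cdot> (\<alpha>' h))\<close> are mutually inverse
  isomorphisms between the descent data of \<open>p\<close> and the algebras of the monad \<open>p l\<close>, over
  \<open>\<A>(y, b)\<close>. So lax descent objects of \<open>p\<close> are exactly Eilenberg--Moore objects of
  \<open>p l\<close>, and both factorizations of \<open>p\<close> agree up to the unique comparison isomorphism.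
  Parts (2)--(4) are part (1) in \<open>\<A>\<^sup>o\<^sup>p\<close>, \<open>\<A>\<^sup>c\<^sup>o\<close> and \<open>\<A>\<^sup>c\<^sup>o\<^sup>o\<^sup>p\<close>: reversing 2-cells swaps
  \<open>\<delta>\<^sub>0, \<delta>\<^sub>1\<close> (and \<open>D\<^sub>0, D\<^sub>2\<close>) but leaves descent data unchanged.
\<close>

locale twocategory =
  fixes A :: "('o, 'a, 'c) twocat"
  assumes twocat: "twocat A"
begin

lemma dm_Ob: "f \<in> Ar A \<Longrightarrow> dm A f \<in> Ob A"
  and cd_Ob: "f \<in> Ar A \<Longrightarrow> cd A f \<in> Ob A"
  using twocat unfolding twocat_def hom_def cells_def by auto

lemma idn_Ar[simp]: "x \<in> Ob A \<Longrightarrow> idn A x \<in> Ar A"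
  and dm_idn[simp]: "x \<in> Ob A \<Longrightarrow> dm A (idn A x) = x"
  and cd_idn[simp]: "x \<in> Ob A \<Longrightarrow> cd A (idn A x) = x"
  using twocat unfolding twocat_def hom_def cells_def by auto

lemma cmp_Ar[simp]: "f \<in> Ar A \<Longrightarrow> g \<in> Ar A \<Longrightarrow> dm A g = cd A f \<Longrightarrow> cmp A g f \<in> Ar A"
  and dm_cmp[simp]: "f \<in> Ar A \<Longrightarrow> g \<in> Ar A \<Longrightarrow> dm A g = cd A f \<Longrightarrow> dm A (cmp A g f) = dm A f"
  and cd_cmp[simp]: "f \<in> Ar A \<Longrightarrow> g \<in> Ar A \<Longrightarrow> dm A g = cd A f \<Longrightarrow> cd A (cmp A g f) = cd A g"
  using twocat unfolding twocat_def hom_def cells_def by auto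

lemma cmp_assoc[simp]:
  "f \<in> Ar A \<Longrightarrow> g \<in> Ar A \<Longrightarrow> h \<in> Ar A \<Longrightarrow> dm A g = cd A f \<Longrightarrow> dm A h = cd A g
   \<Longrightarrow> cmp A h (cmp A g f) = cmp A (cmp A h g) f"
  using twocat unfolding twocat_def by metis

lemma cmp_idn_left[simp]: "f \<in> Ar A \<Longrightarrow> x = cd A f \<Longrightarrow> cmp A (idn A x) f = f"
  and cmp_idn_right[simp]: "f \<in> Ar A \<Longrightarrow> x = dm A f \<Longrightarrow> cmp A f (idn A x) = f"
  using twocat unfolding twocat_def hom_def cells_def by auto

lemma s2_Ar[simp]: "\<alpha> \<in> Cl A \<Longrightarrow> s2 A \<alpha> \<in> Ar A"
  and t2_Ar[simp]: "\<alpha> \<in> Cl A \<Longrightarrow> t2 A \<alpha> \<in> Ar A"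
  and dm_t2[simp]: "\<alpha> \<in> Cl A \<Longrightarrow> dm A (t2 A \<alpha>) = dm A (s2 A \<alpha>)"
  and cd_t2[simp]: "\<alpha> \<in> Cl A \<Longrightarrow> cd A (t2 A \<alpha>) = cd A (s2 A \<alpha>)"
  using twocat unfolding twocat_def hom_def cells_def by auto

lemma id2_Cl[simp]: "f \<in> Ar A \<Longrightarrow> id2 A f \<in> Cl A"
  and s2_id2[simp]: "f \<in> Ar A \<Longrightarrow> s2 A (id2 A f) = f"
  and t2_id2[simp]: "f \<in> Ar A \<Longrightarrow> t2 A (id2 A f) = f"
  using twocat unfolding twocat_def hom_def cells_def by auto

lemma vc_Cl[simp]: "\<alpha> \<in> Cl A \<Longrightarrow> \<beta> \<in> Cl A \<Longrightarrow> s2 A \<beta> = t2 A \<alpha> \<Longrightarrow> vc A \<beta> \<alpha> \<in> Cl A"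
  and s2_vc[simp]: "\<alpha> \<in> Cl A \<Longrightarrow> \<beta> \<in> Cl A \<Longrightarrow> s2 A \<beta> = t2 A \<alpha> \<Longrightarrow> s2 A (vc A \<beta> \<alpha>) = s2 A \<alpha>"
  and t2_vc[simp]: "\<alpha> \<in> Cl A \<Longrightarrow> \<beta> \<in> Cl A \<Longrightarrow> s2 A \<beta> = t2 A \<alpha> \<Longrightarrow> t2 A (vc A \<beta> \<alpha>) = t2 A \<beta>"
  using twocat unfolding twocat_def hom_def cells_def by auto

lemma hc_cells:
  "\<alpha> \<in> Cl A \<Longrightarrow> \<beta> \<in> Cl A \<Longrightarrow> dm A (s2 A \<beta>) = cd A (s2 A \<alpha>)
   \<Longrightarrow> hc A \<beta> \<alpha> \<in> cells A (cmp A (s2 A \<beta>) (s2 A \<alpha>)) (cmp A (t2 A \<beta>) (t2 A \<alpha>))"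
  using twocat unfolding twocat_def by blast

lemma hc_Cl[simp]:
    "\<alpha> \<in> Cl A \<Longrightarrow> \<beta> \<in> Cl A \<Longrightarrow> dm A (s2 A \<beta>) = cd A (s2 A \<alpha>) \<Longrightarrow> hc A \<beta> \<alpha> \<in> Cl A"
  and s2_hc[simp]: "\<alpha> \<in> Cl A \<Longrightarrow> \<beta> \<in> Cl A \<Longrightarrow> dm A (s2 A \<beta>) = cd A (s2 A \<alpha>)
    \<Longrightarrow> s2 A (hc A \<beta> \<alpha>) = cmp A (s2 A \<beta>) (s2 A \<alpha>)"
  and t2_hc[simp]: "\<alpha> \<in> Cl A \<Longrightarrow> \<beta> \<in> Cl A \<Longrightarrow> dm A (s2 A \<beta>) = cd A (s2 A \<alpha>)
    \<Longrightarrow> t2 A (hc A \<beta> \<alpha>) = cmp A (t2 A \<beta>) (t2 A \<alpha>)"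
  using hc_cells unfolding cells_def by auto

lemma vc_assoc[simp]:
  "\<alpha> \<in> Cl A \<Longrightarrow> \<beta> \<in> Cl A \<Longrightarrow> \<gamma> \<in> Cl A \<Longrightarrow> s2 A \<beta> = t2 A \<alpha> \<Longrightarrow> s2 A \<gamma> = t2 A \<beta>
   \<Longrightarrow> vc A (vc A \<gamma> \<beta>) \<alpha> = vc A \<gamma> (vc A \<beta> \<alpha>)"
  using twocat unfolding twocat_def by metis

lemma vc_id2_left[simp]: "\<alpha> \<in> Cl A \<Longrightarrow> f = t2 A \<alpha> \<Longrightarrow> vc A (id2 A f) \<alpha> = \<alpha>"
  and vc_id2_right[simp]: "\<alpha> \<in> Cl A \<Longrightarrow> f = s2 A \<alpha> \<Longrightarrow> vc A \<alpha> (id2 A f) = \<alpha>"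
  using twocat unfolding twocat_def hom_def cells_def by auto

lemma hc_assoc[simp]:
  "\<alpha> \<in> Cl A \<Longrightarrow> \<beta> \<in> Cl A \<Longrightarrow> \<gamma> \<in> Cl A \<Longrightarrow> dm A (s2 A \<beta>) = cd A (s2 A \<alpha>)
   \<Longrightarrow> dm A (s2 A \<gamma>) = cd A (s2 A \<beta>) \<Longrightarrow> hc A \<gamma> (hc A \<beta> \<alpha>) = hc A (hc A \<gamma> \<beta>) \<alpha>"
  using twocat unfolding twocat_def hom_def cells_def by blast

lemma hc_id2_id2[simp]:
  "f \<in> Ar A \<Longrightarrow> g \<in> Ar A \<Longrightarrow> dm A g = cd A f \<Longrightarrow> hc A (id2 A g) (id2 A f) = id2 A (cmp A g f)"
  using twocat unfolding twocat_def hom_def cells_def by blast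

lemma hc_idn_left[simp]: "\<alpha> \<in> Cl A \<Longrightarrow> x = cd A (s2 A \<alpha>) \<Longrightarrow> hc A (id2 A (idn A x)) \<alpha> = \<alpha>"
  using twocat unfolding twocat_def by metis

lemma hc_idn_right[simp]: "\<alpha> \<in> Cl A \<Longrightarrow> x = dm A (s2 A \<alpha>) \<Longrightarrow> hc A \<alpha> (id2 A (idn A x)) = \<alpha>"
  using twocat unfolding twocat_def by metis

lemma interchange:
  "\<alpha> \<in> Cl A \<Longrightarrow> \<alpha>' \<in> Cl A \<Longrightarrow> \<beta> \<in> Cl A \<Longrightarrow> \<beta>' \<in> Cl A \<Longrightarrow>
   s2 A \<alpha>' = t2 A \<alpha> \<Longrightarrow> s2 A \<beta>' = t2 A \<beta> \<Longrightarrow> dm A (s2 A \<beta>) = cd A (s2 A \<alpha>) \<Longrightarrow>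
   hc A (vc A \<beta>' \<beta>) (vc A \<alpha>' \<alpha>) = vc A (hc A \<beta>' \<alpha>') (hc A \<beta> \<alpha>)"
  using twocat unfolding twocat_def hom_def cells_def by blast

lemma whisker_right_cmp[simp]:
  "\<alpha> \<in> Cl A \<Longrightarrow> f \<in> Ar A \<Longrightarrow> g \<in> Ar A \<Longrightarrow> dm A (s2 A \<alpha>) = cd A f \<Longrightarrow> dm A f = cd A g
   \<Longrightarrow> hc A (hc A \<alpha> (id2 A f)) (id2 A g) = hc A \<alpha> (id2 A (cmp A f g))"
  by (subst hc_assoc[symmetric]) auto

lemma whisker_left_vc[simp]:
  "\<alpha> \<in> Cl A \<Longrightarrow> \<beta> \<in> Cl A \<Longrightarrow> s2 A \<beta> = t2 A \<alpha> \<Longrightarrow> g \<in> Ar A \<Longrightarrow> dm A g = cd A (s2 A \<alpha>)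
   \<Longrightarrow> hc A (id2 A g) (vc A \<beta> \<alpha>) = vc A (hc A (id2 A g) \<beta>) (hc A (id2 A g) \<alpha>)"
  using interchange[of \<alpha> \<beta> "id2 A g" "id2 A g"] by simp

lemma whisker_right_vc[simp]:
  "\<alpha> \<in> Cl A \<Longrightarrow> \<beta> \<in> Cl A \<Longrightarrow> s2 A \<beta> = t2 A \<alpha> \<Longrightarrow> f \<in> Ar A \<Longrightarrow> dm A (s2 A \<alpha>) = cd A f
   \<Longrightarrow> hc A (vc A \<beta> \<alpha>) (id2 A f) = vc A (hc A \<beta> (id2 A f)) (hc A \<alpha> (id2 A f))"
  using interchange[of "id2 A f" "id2 A f" \<alpha> \<beta>] by simp

lemma whisker_exchange:
  assumes "\<alpha> \<in> Cl A" "\<beta> \<in> Cl A" "dm A (s2 A \<beta>) = cd A (s2 A \<alpha>)"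
  shows "vc A (hc A (id2 A (t2 A \<beta>)) \<alpha>) (hc A \<beta> (id2 A (s2 A \<alpha>)))
       = vc A (hc A \<beta> (id2 A (t2 A \<alpha>))) (hc A (id2 A (s2 A \<beta>)) \<alpha>)"
proof -
  have "hc A \<beta> \<alpha> = vc A (hc A (id2 A (t2 A \<beta>)) \<alpha>) (hc A \<beta> (id2 A (s2 A \<alpha>)))"
    using interchange[of "id2 A (s2 A \<alpha>)" \<alpha> \<beta> "id2 A (t2 A \<beta>)"] assms by simp
  moreover have "hc A \<beta> \<alpha> = vc A (hc A \<beta> (id2 A (t2 A \<alpha>))) (hc A (id2 A (s2 A \<beta>)) \<alpha>)"
    using interchange[of \<alpha> "id2 A (t2 A \<alpha>)" "id2 A (s2 A \<beta>)" \<beta>] assms by simp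
  ultimately show ?thesis by simp
qed

lemma vc_reassoc:
  "vc A \<beta> \<alpha> = \<gamma> \<Longrightarrow> \<rho> \<in> Cl A \<Longrightarrow> \<beta> \<in> Cl A \<Longrightarrow> \<alpha> \<in> Cl A \<Longrightarrow> s2 A \<beta> = t2 A \<alpha> \<Longrightarrow> s2 A \<alpha> = t2 A \<rho>
   \<Longrightarrow> vc A \<beta> (vc A \<alpha> \<rho>) = vc A \<gamma> \<rho>"
  by (metis vc_assoc)

lemma whisker_right_reassoc:
  "hc A \<alpha> (id2 A f) = \<rho> \<Longrightarrow> \<alpha> \<in> Cl A \<Longrightarrow> f \<in> Ar A \<Longrightarrow> g \<in> Ar A \<Longrightarrow> dm A (s2 A \<alpha>) = cd A f
   \<Longrightarrow> dm A f = cd A g \<Longrightarrow> hc A \<alpha> (id2 A (cmp A f g)) = hc A \<rho> (id2 A g)"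
  by (metis whisker_right_cmp)

lemma whisker_left_reassoc:
  "hc A (id2 A f) \<alpha> = \<rho> \<Longrightarrow> \<alpha> \<in> Cl A \<Longrightarrow> f \<in> Ar A \<Longrightarrow> g \<in> Ar A \<Longrightarrow> dm A f = cd A (s2 A \<alpha>)
   \<Longrightarrow> dm A g = cd A f \<Longrightarrow> hc A (id2 A (cmp A g f)) \<alpha> = hc A (id2 A g) \<rho>"
  by (metis hc_assoc hc_id2_id2 id2_Cl s2_id2)

lemma cmp_reassoc:
  "cmp A g f = h \<Longrightarrow> f \<in> Ar A \<Longrightarrow> g \<in> Ar A \<Longrightarrow> k \<in> Ar A \<Longrightarrow> dm A g = cd A f \<Longrightarrow> dm A k = cd A g
   \<Longrightarrow> cmp A (cmp A k g) f = cmp A k h"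
  by (metis cmp_assoc)

lemma homD: "f \<in> hom A x y \<Longrightarrow> f \<in> Ar A \<and> dm A f = x \<and> cd A f = y"
  by (simp add: hom_def)

lemma cellsD: "\<alpha> \<in> cells A f g \<Longrightarrow> \<alpha> \<in> Cl A \<and> s2 A \<alpha> = f \<and> t2 A \<alpha> = g"
  by (simp add: cells_def)

lemma homI: "f \<in> Ar A \<Longrightarrow> dm A f = x \<Longrightarrow> cd A f = y \<Longrightarrow> f \<in> hom A x y"
  by (simp add: hom_def)

lemma cellsI: "\<alpha> \<in> Cl A \<Longrightarrow> s2 A \<alpha> = f \<Longrightarrow> t2 A \<alpha> = g \<Longrightarrow> \<alpha> \<in> cells A f g"
  by (simp add: cells_def)

end

lemma cat_iso_inj:
  "cat_iso O1 H1 c1 i1 O2 H2 c2 i2 F G \<Longrightarrow> x \<in> O1 \<Longrightarrow> x' \<in> O1 \<Longrightarrow> F x = F x' \<Longrightarrow> x = x'"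
  unfolding cat_iso_def bij_betw_def inj_on_def by blast

lemma cat_iso_surj:
  "cat_iso O1 H1 c1 i1 O2 H2 c2 i2 F G \<Longrightarrow> y \<in> O2 \<Longrightarrow> \<exists>x\<in>O1. F x = y"
  unfolding cat_iso_def bij_betw_def by blast

lemma cat_iso_in: "cat_iso O1 H1 c1 i1 O2 H2 c2 i2 F G \<Longrightarrow> x \<in> O1 \<Longrightarrow> F x \<in> O2"
  unfolding cat_iso_def bij_betw_def by blast

lemma cat_iso_hom_surj:
  "cat_iso O1 H1 c1 i1 O2 H2 c2 i2 F G \<Longrightarrow> x \<in> O1 \<Longrightarrow> x' \<in> O1 \<Longrightarrow> m \<in> H2 (F x) (F x')
   \<Longrightarrow> \<exists>n\<in>H1 x x'. G n = m"
  unfolding cat_iso_def bij_betw_def by (metis imageE)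

lemma cat_iso_comp_bij:
  assumes iso: "cat_iso O1 H1 c1 i1 O2 H2 c2 i2 F G"
    and bij: "bij_betw \<Phi> O2 O3"
    and hom_eq: "\<And>x x'. x \<in> O2 \<Longrightarrow> x' \<in> O2 \<Longrightarrow> H3 (\<Phi> x) (\<Phi> x') = H2 x x'"
    and id_eq: "\<And>x. x \<in> O2 \<Longrightarrow> i3 (\<Phi> x) = i2 x"
    and F': "\<And>x. x \<in> O1 \<Longrightarrow> F' x = \<Phi> (F x)"
  shows "cat_iso O1 H1 c1 i1 O3 H3 c2 i3 F' G"
proof -
  have F_in: "\<And>x. x \<in> O1 \<Longrightarrow> F x \<in> O2"
    using iso by (rule cat_iso_in)
  have "bij_betw (\<Phi> \<circ> F) O1 O3"
    using iso bij unfolding cat_iso_def by (blast intro: bij_betw_trans)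
  then have "bij_betw F' O1 O3"
    by (rule bij_betw_cong[THEN iffD1, rotated]) (simp add: F')
  then show ?thesis
    using iso unfolding cat_iso_def by (simp add: F' F_in hom_eq id_eq)
qed

lemma cat_iso_opposite:
  assumes iso: "cat_iso O1 H1 c1 i1 O2 H2 c2 i2 F G"
    and bij_obj: "bij_betw \<sigma> O2 O3"
    and bij_hom: "\<And>x x'. x \<in> O2 \<Longrightarrow> x' \<in> O2 \<Longrightarrow> bij_betw \<tau> (H2 x' x) (H3 (\<sigma> x) (\<sigma> x'))"
    and id_eq: "\<And>x. x \<in> O2 \<Longrightarrow> i3 (\<sigma> x) = \<tau> (i2 x)"
    and comp_eq: "\<And>x x' x'' n n'. x \<in> O2 \<Longrightarrow> x' \<in> O2 \<Longrightarrow> x'' \<in> O2 \<Longrightarrow> n \<in> H2 x' x \<Longrightarrow>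
        n' \<in> H2 x'' x' \<Longrightarrow> c3 (\<tau> n') (\<tau> n) = \<tau> (c2 n n')"
    and F': "\<And>x. F' x = \<sigma> (F x)" and G': "\<And>m. G' m = \<tau> (G m)"
  shows "cat_iso O1 (\<lambda>x x'. H1 x' x) (\<lambda>m' m. c1 m m') i1 O3 H3 c3 i3 F' G'"
proof -
  have bij_F: "bij_betw F O1 O2"
    and bij_G: "\<And>x x'. x \<in> O1 \<Longrightarrow> x' \<in> O1 \<Longrightarrow> bij_betw G (H1 x x') (H2 (F x) (F x'))"
    and id_G: "\<And>x. x \<in> O1 \<Longrightarrow> G (i1 x) = i2 (F x)"
    and comp_G: "\<And>x x' x'' m m'. x \<in> O1 \<Longrightarrow> x' \<in> O1 \<Longrightarrow> x'' \<in> O1 \<Longrightarrow> m \<in> H1 x x' \<Longrightarrow>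
        m' \<in> H1 x' x'' \<Longrightarrow> G (c1 m' m) = c2 (G m') (G m)"
    using iso unfolding cat_iso_def by blast+
  have F_in: "\<And>x. x \<in> O1 \<Longrightarrow> F x \<in> O2"
    using iso by (rule cat_iso_in)
  have F'_eq: "F' = \<sigma> \<circ> F" and G'_eq: "G' = \<tau> \<circ> G"
    using F' G' by (simp_all add: fun_eq_iff)
  have "bij_betw F' O1 O3"
    unfolding F'_eq by (rule bij_betw_trans[OF bij_F bij_obj])
  moreover have "bij_betw G' (H1 x' x) (H3 (F' x) (F' x'))" if "x \<in> O1" "x' \<in> O1" for x x'
    unfolding G'_eq using bij_betw_trans[OF bij_G[OF that(2,1)] bij_hom[OF F_in F_in]] that
    by (simp add: F')
  moreover have "G' (i1 x) = i3 (F' x)" if "x \<in> O1" for x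
    using that by (simp add: G' F' id_G id_eq F_in)
  moreover have "G' (c1 m m') = c3 (G' m') (G' m)"
    if "x \<in> O1" "x' \<in> O1" "x'' \<in> O1" "m \<in> H1 x' x" "m' \<in> H1 x'' x'" for x x' x'' m m'
  proof -
    have "G m \<in> H2 (F x') (F x)" "G m' \<in> H2 (F x'') (F x')"
      using bij_G[OF that(2,1)] bij_G[OF that(3,2)] that(4,5) unfolding bij_betw_def by blast+
    then show ?thesis
      using comp_G[OF that(3,2,1) that(5,4)] comp_eq[OF F_in F_in F_in] that(1-3) by (simp add: G')
  qed
  ultimately show ?thesis
    unfolding cat_iso_def by blast
qed

lemma lax_descent_object_cat_iso:
  assumes "is_lax_descent_object A p K L d \<Psi>" "y \<in> Ob A"
  shows "cat_iso (hom A y L) (cells A) (vc A) (id2 A) (desc_obj A p K y) (desc_hom A K) (vc A)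
        (\<lambda>(h, \<beta>). id2 A h) (\<lambda>g. (cmp A d g, hc A \<Psi> (id2 A g))) (\<lambda>\<xi>. hc A (id2 A d) \<xi>)"
  using assms unfolding is_lax_descent_object_def by blast

lemma EM_object_cat_iso:
  assumes "is_EM_object A t m \<eta> X u \<mu>" "y \<in> Ob A"
  shows "cat_iso (hom A y X) (cells A) (vc A) (id2 A)
        (em_obj A t m \<eta> y) (em_hom A t) (vc A) (\<lambda>(h, \<beta>). id2 A h)
        (\<lambda>g. (cmp A u g, hc A \<mu> (id2 A g))) (\<lambda>\<xi>. hc A (id2 A u) \<xi>)"
  using assms unfolding is_EM_object_def by blast

context twocategory
begin

lemma desc_objD:
  assumes "(h, \<gamma>) \<in> desc_obj A p K y"
  shows "h \<in> Ar A" "dm A h = y" "cd A h = cd A p"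
    and "\<gamma> \<in> Cl A" "s2 A \<gamma> = cmp A (ck_d1 K) h" "t2 A \<gamma> = cmp A (ck_d0 K) h"
    and "vc A (hc A (id2 A (ck_D0 K)) \<gamma>) (hc A (id2 A (ck_D2 K)) \<gamma>) = hc A (id2 A (ck_D1 K)) \<gamma>"
    and "hc A (id2 A (ck_s0 K)) \<gamma> = id2 A h"
  using assms unfolding desc_obj_def by (auto dest: homD cellsD)

lemma em_objD:
  assumes "(h, \<beta>) \<in> em_obj A t m \<eta> y"
  shows "h \<in> Ar A" "dm A h = y" "cd A h = dm A t"
    and "\<beta> \<in> Cl A" "s2 A \<beta> = cmp A t h" "t2 A \<beta> = h"
    and "vc A \<beta> (hc A (id2 A t) \<beta>) = vc A \<beta> (hc A m (id2 A h))"
    and "vc A \<beta> (hc A \<eta> (id2 A h)) = id2 A h"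
  using assms unfolding em_obj_def by (auto dest: homD cellsD)

lemma lax_descent_objectD:
  assumes "is_lax_descent_object A p K L d \<Psi>"
  shows "L \<in> Ob A" "d \<in> Ar A" "dm A d = L" "cd A d = cd A p"
    and "\<Psi> \<in> Cl A" "s2 A \<Psi> = cmp A (ck_d1 K) d" "t2 A \<Psi> = cmp A (ck_d0 K) d"
  using assms unfolding is_lax_descent_object_def by (auto dest: homD cellsD)

lemma EM_objectD:
  assumes "is_EM_object A t m \<eta> X u \<mu>"
  shows "X \<in> Ob A" "u \<in> Ar A" "dm A u = X" "cd A u = dm A t"
    and "\<mu> \<in> Cl A" "s2 A \<mu> = cmp A t u" "t2 A \<mu> = u"
  using assms unfolding is_EM_object_def by (auto dest: homD cellsD)

lemma EM_object_lift:
  assumes "is_EM_object A t m \<eta> X u \<mu>" "y \<in> Ob A" "(h, \<beta>) \<in> em_obj A t m \<eta> y"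
  obtains g where "g \<in> hom A y X" "cmp A u g = h" "hc A \<mu> (id2 A g) = \<beta>"
  using cat_iso_surj[OF EM_object_cat_iso[OF assms(1,2)] assms(3)] by auto

lemma EM_object_map_eqI:
  assumes "is_EM_object A t m \<eta> X u \<mu>" "y \<in> Ob A" "g \<in> hom A y X" "g' \<in> hom A y X"
    and "cmp A u g = cmp A u g'" "hc A \<mu> (id2 A g) = hc A \<mu> (id2 A g')"
  shows "g = g'"
  using cat_iso_inj[OF EM_object_cat_iso[OF assms(1,2)] assms(3,4)] assms(5,6) by simp

lemma EM_object_algebra:
  assumes "is_EM_object A t m \<eta> X u \<mu>" "t \<in> Ar A"
  shows "(u, \<mu>) \<in> em_obj A t m \<eta> X"
proof -
  note [simp] = EM_objectD[OF assms(1)] assms(2)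
  have "(cmp A u (idn A X), hc A \<mu> (id2 A (idn A X))) \<in> em_obj A t m \<eta> X"
    using cat_iso_in[OF EM_object_cat_iso[OF assms(1)] homI[of "idn A X"]] by simp
  then show ?thesis
    by simp
qed

lemma EM_factorizations_iso:
  assumes t: "t \<in> Ar A"
    and X: "is_EM_object A t m \<eta> X u \<mu>" and L: "is_EM_object A t m \<eta> L d \<mu>'"
    and z: "z \<in> Ob A" and k: "k \<in> hom A z X" and pH: "pH \<in> hom A z L"
    and uk: "cmp A u k = cmp A d pH" and \<mu>k: "hc A \<mu> (id2 A k) = hc A \<mu>' (id2 A pH)"
  shows "iso_factorizations A L d pH X u k"
proof -
  note [simp] = EM_objectD[OF X] EM_objectD[OF L]
  have [simp]: "k \<in> Ar A" "dm A k = z" "cd A k = X" "pH \<in> Ar A" "dm A pH = z" "cd A pH = L"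
    using k pH by (auto dest: homD)
  obtain \<phi> where \<phi>: "\<phi> \<in> hom A L X" "cmp A u \<phi> = d" "hc A \<mu> (id2 A \<phi>) = \<mu>'"
    using EM_object_lift[OF X _ EM_object_algebra[OF L t]] by auto
  obtain \<psi> where \<psi>: "\<psi> \<in> hom A X L" "cmp A d \<psi> = u" "hc A \<mu>' (id2 A \<psi>) = \<mu>"
    using EM_object_lift[OF L _ EM_object_algebra[OF X t]] by auto
  have [simp]: "\<phi> \<in> Ar A" "dm A \<phi> = L" "cd A \<phi> = X" "\<psi> \<in> Ar A" "dm A \<psi> = X" "cd A \<psi> = L"
    using \<phi>(1) \<psi>(1) by (auto dest: homD)
  have "cmp A \<psi> \<phi> = idn A L"
  proof (rule EM_object_map_eqI[OF L])
    show "hc A \<mu>' (id2 A (cmp A \<psi> \<phi>)) = hc A \<mu>' (id2 A (idn A L))"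
      using whisker_right_reassoc[OF \<psi>(3), of \<phi>] \<phi>(3) t by simp
  qed (use \<phi>(2) \<psi>(2) in \<open>auto intro: homI\<close>)
  moreover have "cmp A \<phi> \<psi> = idn A X"
  proof (rule EM_object_map_eqI[OF X])
    show "hc A \<mu> (id2 A (cmp A \<phi> \<psi>)) = hc A \<mu> (id2 A (idn A X))"
      using whisker_right_reassoc[OF \<phi>(3), of \<psi>] \<psi>(3) t by simp
  qed (use \<phi>(2) \<psi>(2) in \<open>auto intro: homI\<close>)
  moreover have "cmp A \<phi> pH = k"
  proof (rule EM_object_map_eqI[OF X z])
    show "hc A \<mu> (id2 A (cmp A \<phi> pH)) = hc A \<mu> (id2 A k)"
      using whisker_right_reassoc[OF \<phi>(3), of pH] \<mu>k t by simp
  qed (use \<phi>(2) uk k in \<open>auto intro: homI\<close>)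
  ultimately show ?thesis
    unfolding iso_factorizations_def using \<phi> \<psi>(1) by blast
qed

end


section \<open>The cokernel diagram of a right adjoint\<close>

locale adjunction_cokernel = twocategory +
  fixes b e :: 'o and l p :: 'a and \<epsilon> \<eta> :: 'c and K :: "('o, 'a, 'c) ckdiag"
  assumes adj: "is_adjunction A b e l p \<epsilon> \<eta>"
    and ck: "is_cokernel_diagram A p K"
begin

abbreviation "C \<equiv> ck_C K"
abbreviation "d0 \<equiv> ck_d0 K"
abbreviation "d1 \<equiv> ck_d1 K"
abbreviation "al \<equiv> ck_al K"
abbreviation "P \<equiv> ck_P K"
abbreviation "D0 \<equiv> ck_D0 K"
abbreviation "D1 \<equiv> ck_D1 K"
abbreviation "D2 \<equiv> ck_D2 K"
abbreviation "s0 \<equiv> ck_s0 K"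

lemma opcomma: "is_opcomma A p C d0 d1 al"
  and pushout: "is_pushout2 A d0 d1 P D2 D0"
  using ck unfolding is_cokernel_diagram_def by auto

lemma objects[simp]: "b \<in> Ob A" "e \<in> Ob A" "C \<in> Ob A" "P \<in> Ob A"
  using adj opcomma pushout unfolding is_adjunction_def is_opcomma_def is_pushout2_def by auto

lemma arrows[simp]:
  "p \<in> Ar A" "dm A p = e" "cd A p = b" "l \<in> Ar A" "dm A l = b" "cd A l = e"
  "d0 \<in> Ar A" "dm A d0 = b" "cd A d0 = C" "d1 \<in> Ar A" "dm A d1 = b" "cd A d1 = C"
  "D0 \<in> Ar A" "dm A D0 = C" "cd A D0 = P" "D1 \<in> Ar A" "dm A D1 = C" "cd A D1 = P"
  "D2 \<in> Ar A" "dm A D2 = C" "cd A D2 = P" "s0 \<in> Ar A" "dm A s0 = C" "cd A s0 = b"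
  using adj opcomma pushout ck
  unfolding is_adjunction_def is_opcomma_def is_pushout2_def is_cokernel_diagram_def hom_def
  by auto

lemma twocells[simp]:
  "\<epsilon> \<in> Cl A" "s2 A \<epsilon> = cmp A l p" "t2 A \<epsilon> = idn A e"
  "\<eta> \<in> Cl A" "s2 A \<eta> = idn A b" "t2 A \<eta> = cmp A p l"
  "al \<in> Cl A" "s2 A al = cmp A d1 p" "t2 A al = cmp A d0 p"
  using adj opcomma unfolding is_adjunction_def is_opcomma_def cells_def by auto

lemma triangle_l: "vc A (hc A \<epsilon> (id2 A l)) (hc A (id2 A l) \<eta>) = id2 A l"
  and triangle_p: "vc A (hc A (id2 A p) \<epsilon>) (hc A \<eta> (id2 A p)) = id2 A p"
  using adj unfolding is_adjunction_def by auto

lemma cokernel_eqs[simp]: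
  "cmp A D2 d0 = cmp A D0 d1" "cmp A D1 d1 = cmp A D2 d1" "cmp A D1 d0 = cmp A D0 d0"
  "cmp A s0 d0 = idn A b" "cmp A s0 d1 = idn A b"
  using ck pushout unfolding is_cokernel_diagram_def is_pushout2_def by auto

lemma cokernel_eqs_reassoc[simp]:
  "f \<in> Ar A \<Longrightarrow> dm A f = P \<Longrightarrow> cmp A (cmp A f D2) d0 = cmp A (cmp A f D0) d1"
  "f \<in> Ar A \<Longrightarrow> dm A f = P \<Longrightarrow> cmp A (cmp A f D1) d1 = cmp A (cmp A f D2) d1"
  "f \<in> Ar A \<Longrightarrow> dm A f = P \<Longrightarrow> cmp A (cmp A f D1) d0 = cmp A (cmp A f D0) d0"
  "f \<in> Ar A \<Longrightarrow> dm A f = b \<Longrightarrow> cmp A (cmp A f s0) d0 = f"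
  "f \<in> Ar A \<Longrightarrow> dm A f = b \<Longrightarrow> cmp A (cmp A f s0) d1 = f"
  by (subst cmp_assoc[symmetric]; simp)+

lemma D1_alpha: "hc A (id2 A D1) al = vc A (hc A (id2 A D0) al) (hc A (id2 A D2) al)"
  and s0_alpha[simp]: "hc A (id2 A s0) al = id2 A p"
  using ck unfolding is_cokernel_diagram_def by auto

lemma s0_alpha_reassoc[simp]:
  "f \<in> Ar A \<Longrightarrow> dm A f = b \<Longrightarrow> hc A (id2 A (cmp A f s0)) al = id2 A (cmp A f p)"
  by (subst whisker_left_reassoc[OF s0_alpha]) auto

lemma opcomma_cat_iso:
  "y \<in> Ob A \<Longrightarrow> cat_iso (hom A C y) (cells A) (vc A) (id2 A)
        (oc_obj A p y) (oc_hom A p) (pair_vc A) (\<lambda>(h0, h1, \<beta>). (id2 A h0, id2 A h1))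
        (\<lambda>h. (cmp A h d0, cmp A h d1, hc A (id2 A h) al))
        (\<lambda>\<xi>. (hc A \<xi> (id2 A d0), hc A \<xi> (id2 A d1)))"
  using opcomma unfolding is_opcomma_def by blast

lemma pushout_cat_iso:
  "y \<in> Ob A \<Longrightarrow> cat_iso (hom A P y) (cells A) (vc A) (id2 A)
        (po_obj A d0 d1 y) (po_hom A d0 d1) (pair_vc A) (\<lambda>(k0, k1). (id2 A k0, id2 A k1))
        (\<lambda>k. (cmp A k D2, cmp A k D0))
        (\<lambda>\<xi>. (hc A \<xi> (id2 A D2), hc A \<xi> (id2 A D0)))"
  using pushout unfolding is_pushout2_def by blast

lemma opcomma_lift_2cell:
  assumes "y \<in> Ob A" "h \<in> hom A C y" "h' \<in> hom A C y"
    and "(\<xi>0, \<xi>1) \<in> oc_hom A p (cmp A h d0, cmp A h d1, hc A (id2 A h) al)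
                                (cmp A h' d0, cmp A h' d1, hc A (id2 A h') al)"
  shows "\<exists>\<theta>\<in>cells A h h'. hc A \<theta> (id2 A d0) = \<xi>0 \<and> hc A \<theta> (id2 A d1) = \<xi>1"
  using cat_iso_hom_surj[OF opcomma_cat_iso[OF assms(1)] assms(2,3)] assms(4) by auto

definition mate where "mate = vc A (hc A al (id2 A l)) (hc A (id2 A d1) \<eta>)"

lemma mate_cells[simp]: "mate \<in> Cl A" "s2 A mate = d1" "t2 A mate = cmp A (cmp A d0 p) l"
  unfolding mate_def by simp_all

lemma s0_mate[simp]: "hc A (id2 A s0) mate = \<eta>"
  unfolding mate_def by simp

lemma alpha_epsilon_exchange:
  "vc A (hc A (id2 A (cmp A d0 p)) \<epsilon>) (hc A al (id2 A (cmp A l p)))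
   = vc A al (hc A (id2 A (cmp A d1 p)) \<epsilon>)"
  using whisker_exchange[of \<epsilon> al] by simp

lemma alpha_from_mate: "vc A (hc A (id2 A (cmp A d0 p)) \<epsilon>) (hc A mate (id2 A p)) = al"
proof -
  have "vc A (hc A (id2 A (cmp A d1 p)) \<epsilon>) (hc A (hc A (id2 A d1) \<eta>) (id2 A p)) = id2 A (cmp A d1 p)"
    using arg_cong[OF triangle_p, of "hc A (id2 A d1)"] by simp
  then show ?thesis
    unfolding mate_def by (simp add: vc_reassoc[OF alpha_epsilon_exchange])
qed

lemma ex_r:
  "\<exists>r \<in> hom A C b. cmp A r d0 = idn A b \<and> cmp A r d1 = cmp A p l
     \<and> hc A (id2 A r) al = hc A (id2 A p) \<epsilon>"
proof -
  have "(idn A b, cmp A p l, hc A (id2 A p) \<epsilon>) \<in> oc_obj A p b"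
    unfolding oc_obj_def by (auto intro!: homI cellsI)
  from cat_iso_surj[OF opcomma_cat_iso[OF objects(1)] this] show ?thesis
    by auto
qed

lemma ex_kappa:
  "\<exists>\<kappa> \<in> hom A C C. cmp A \<kappa> d0 = cmp A (cmp A d0 p) l \<and> cmp A \<kappa> d1 = d1
     \<and> hc A (id2 A \<kappa>) al = hc A mate (id2 A p)"
proof -
  have "(cmp A (cmp A d0 p) l, d1, hc A mate (id2 A p)) \<in> oc_obj A p C"
    unfolding oc_obj_def by (auto intro!: homI cellsI)
  from cat_iso_surj[OF opcomma_cat_iso[OF objects(3)] this] show ?thesis
    by auto
qed

lemma ex_theta:
  assumes \<kappa>: "\<kappa> \<in> hom A C C" "cmp A \<kappa> d0 = cmp A (cmp A d0 p) l" "cmp A \<kappa> d1 = d1"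
    "hc A (id2 A \<kappa>) al = hc A mate (id2 A p)"
  shows "\<exists>\<theta> \<in> cells A (cmp A d1 s0) \<kappa>. hc A \<theta> (id2 A d0) = mate \<and> hc A \<theta> (id2 A d1) = id2 A d1"
proof (rule opcomma_lift_2cell[OF objects(3) _ \<kappa>(1)])
  have [simp]: "\<kappa> \<in> Ar A" "dm A \<kappa> = C" "cd A \<kappa> = C"
    using \<kappa>(1) by (auto dest: homD)
  show "cmp A d1 s0 \<in> hom A C C"
    by (auto intro!: homI)
  have "(mate, id2 A d1) \<in> oc_hom A p (d1, d1, id2 A (cmp A d1 p))
      (cmp A (cmp A d0 p) l, d1, hc A mate (id2 A p))"
    unfolding oc_hom_def by (auto intro!: cellsI)
  then show "(mate, id2 A d1) \<in> oc_hom A p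
      (cmp A (cmp A d1 s0) d0, cmp A (cmp A d1 s0) d1, hc A (id2 A (cmp A d1 s0)) al)
      (cmp A \<kappa> d0, cmp A \<kappa> d1, hc A (id2 A \<kappa>) al)"
    using \<kappa> by simp
qed

lemma ex_Q:
  assumes r: "r \<in> hom A C b" "cmp A r d0 = idn A b" "cmp A r d1 = cmp A p l"
      "hc A (id2 A r) al = hc A (id2 A p) \<epsilon>"
    and \<kappa>: "\<kappa> \<in> hom A C C" "cmp A \<kappa> d0 = cmp A (cmp A d0 p) l" "cmp A \<kappa> d1 = d1"
      "hc A (id2 A \<kappa>) al = hc A mate (id2 A p)"
  shows "\<exists>Q \<in> hom A P C. cmp A Q D2 = \<kappa> \<and> cmp A Q D0 = cmp A d0 r \<and> cmp A Q D1 = idn A C"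
proof -
  have [simp]: "\<kappa> \<in> Ar A" "dm A \<kappa> = C" "cd A \<kappa> = C" "r \<in> Ar A" "dm A r = C" "cd A r = b"
    using \<kappa>(1) r(1) by (auto dest: homD)
  have [simp]: "cmp A (cmp A d0 r) d1 = cmp A (cmp A d0 p) l" "cmp A (cmp A d0 r) d0 = d0"
    using cmp_reassoc[OF r(3), of d0] cmp_reassoc[OF r(2), of d0] by simp_all
  have d0_r_alpha: "hc A (id2 A (cmp A d0 r)) al = hc A (id2 A (cmp A d0 p)) \<epsilon>"
    using whisker_left_reassoc[OF r(4), of d0] by simp
  have "(\<kappa>, cmp A d0 r) \<in> po_obj A d0 d1 C"
    unfolding po_obj_def using \<kappa> by (auto intro!: homI)
  from cat_iso_surj[OF pushout_cat_iso[OF objects(3)] this]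
  obtain Q where Q: "Q \<in> hom A P C" "cmp A Q D2 = \<kappa>" "cmp A Q D0 = cmp A d0 r"
    by auto
  have [simp]: "Q \<in> Ar A" "dm A Q = P" "cd A Q = C"
    using Q(1) by (auto dest: homD)
  have "cmp A (cmp A Q D1) d0 = d0" "cmp A (cmp A Q D1) d1 = d1"
    using Q \<kappa> by simp_all
  moreover have "hc A (id2 A (cmp A Q D1)) al = al"
    using whisker_left_reassoc[OF D1_alpha, of Q] Q \<kappa> by (simp add: d0_r_alpha alpha_from_mate)
  ultimately have "cmp A Q D1 = idn A C"
    by (intro cat_iso_inj[OF opcomma_cat_iso[OF objects(3)]]) (auto intro!: homI)
  then show ?thesis
    using Q by auto
qed

lemma ex_Q2:
  assumes r: "r \<in> hom A C b" "cmp A r d0 = idn A b" "cmp A r d1 = cmp A p l"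
  shows "\<exists>Q2 \<in> hom A P b. cmp A Q2 D2 = cmp A (cmp A p l) r \<and> cmp A Q2 D0 = r"
proof -
  have [simp]: "r \<in> Ar A" "dm A r = C" "cd A r = b"
    using r(1) by (auto dest: homD)
  have "cmp A (cmp A (cmp A p l) r) d0 = cmp A p l"
    using cmp_reassoc[OF r(2), of "cmp A p l"] by simp
  then have "(cmp A (cmp A p l) r, r) \<in> po_obj A d0 d1 b"
    unfolding po_obj_def using r(3) by (auto intro!: homI)
  from cat_iso_surj[OF pushout_cat_iso[OF objects(1)] this] show ?thesis
    by auto
qed

end

section \<open>Descent data as algebras\<close>

locale comparison_cells = adjunction_cokernel +
  fixes r \<kappa> \<theta> Q Q2
  assumes r: "r \<in> hom A C b" and r_d0[simp]: "cmp A r d0 = idn A b"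
    and r_d1[simp]: "cmp A r d1 = cmp A p l" and r_alpha[simp]: "hc A (id2 A r) al = hc A (id2 A p) \<epsilon>"
  and \<kappa>: "\<kappa> \<in> hom A C C" and \<kappa>_d0[simp]: "cmp A \<kappa> d0 = cmp A (cmp A d0 p) l"
    and \<kappa>_d1[simp]: "cmp A \<kappa> d1 = d1" and \<kappa>_alpha[simp]: "hc A (id2 A \<kappa>) al = hc A mate (id2 A p)"
  and \<theta>: "\<theta> \<in> cells A (cmp A d1 s0) \<kappa>" and \<theta>_d0: "hc A \<theta> (id2 A d0) = mate"
    and \<theta>_d1: "hc A \<theta> (id2 A d1) = id2 A d1"
  and Q: "Q \<in> hom A P C" and Q_D2[simp]: "cmp A Q D2 = \<kappa>" and Q_D0[simp]: "cmp A Q D0 = cmp A d0 r"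
    and Q_D1[simp]: "cmp A Q D1 = idn A C"
  and Q2: "Q2 \<in> hom A P b" and Q2_D2[simp]: "cmp A Q2 D2 = cmp A (cmp A p l) r"
    and Q2_D0[simp]: "cmp A Q2 D0 = r"
begin

lemma comparison_arrows[simp]:
  "r \<in> Ar A" "dm A r = C" "cd A r = b" "\<kappa> \<in> Ar A" "dm A \<kappa> = C" "cd A \<kappa> = C"
  "Q \<in> Ar A" "dm A Q = P" "cd A Q = C" "Q2 \<in> Ar A" "dm A Q2 = P" "cd A Q2 = b"
  "\<theta> \<in> Cl A" "s2 A \<theta> = cmp A d1 s0" "t2 A \<theta> = \<kappa>"
  using r \<kappa> Q Q2 \<theta> by (auto dest: homD cellsD)

lemma r_reassoc[simp]:
  "f \<in> Ar A \<Longrightarrow> dm A f = b \<Longrightarrow> cmp A (cmp A f r) d0 = f"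
  "f \<in> Ar A \<Longrightarrow> dm A f = b \<Longrightarrow> cmp A (cmp A f r) d1 = cmp A (cmp A f p) l"
  "f \<in> Ar A \<Longrightarrow> dm A f = b \<Longrightarrow> hc A (id2 A (cmp A f r)) al = hc A (id2 A (cmp A f p)) \<epsilon>"
  by (subst cmp_reassoc[OF r_d0] cmp_reassoc[OF r_d1] whisker_left_reassoc[OF r_alpha]; simp)+

lemma r_mate[simp]: "hc A (id2 A r) mate = id2 A (cmp A p l)"
  using arg_cong[OF triangle_l, of "hc A (id2 A p)"] unfolding mate_def by simp

lemma Q2_D1_mate[simp]: "hc A (id2 A (cmp A Q2 D1)) mate = hc A (hc A (id2 A p) \<epsilon>) (id2 A l)"
proof -
  have "hc A (id2 A (cmp A Q2 D1)) al
      = vc A (hc A (id2 A p) \<epsilon>) (hc A (id2 A (cmp A (cmp A p l) p)) \<epsilon>)"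
    using whisker_left_reassoc[OF D1_alpha, of Q2] by simp
  then show ?thesis
    using arg_cong[OF triangle_l, of "hc A (id2 A (cmp A (cmp A p l) p))"]
    unfolding mate_def by simp
qed

lemma D1_mate:
  "hc A (id2 A D1) mate
   = vc A (hc A (hc A (id2 A (cmp A D0 d0)) (hc A (id2 A p) \<epsilon>)) (id2 A l))
       (vc A (hc A (hc A (id2 A D0) mate) (id2 A (cmp A p l))) (hc A (id2 A D2) mate))"
proof -
  note exchange = arg_cong[OF alpha_epsilon_exchange,
      of "\<lambda>x. hc A (hc A (id2 A D0) x) (id2 A l)", simplified]
  note triangle = arg_cong[OF triangle_p,
      of "\<lambda>x. hc A (hc A (id2 A (cmp A D0 d1)) x) (id2 A l)", simplified]
  have "hc A (hc A (id2 A D1) al) (id2 A l)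
      = vc A (hc A (hc A (id2 A D0) al) (id2 A l)) (hc A (hc A (id2 A D2) al) (id2 A l))"
    by (simp add: D1_alpha)
  then show ?thesis
    unfolding mate_def by (simp add: vc_reassoc[OF exchange] vc_reassoc[OF triangle] triangle)
qed

lemma descent_datum_decomposition:
  assumes "(h, \<gamma>) \<in> desc_obj A p K y"
  shows "\<gamma> = vc A (hc A (id2 A (cmp A d0 r)) \<gamma>) (hc A mate (id2 A h))"
proof -
  note [simp] = desc_objD(1-6)[OF assms]
  \<comment> \<open>whisker the cocycle condition by \<open>Q\<close>, then use \<open>\<theta>\<close> to rewrite \<open>\<kappa> \<gamma>\<close> as \<open>\<alpha>' h\<close>\<close>
  have "\<gamma> = vc A (hc A (id2 A (cmp A d0 r)) \<gamma>) (hc A (id2 A \<kappa>) \<gamma>)"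
    using arg_cong[OF desc_objD(7)[OF assms], of "hc A (id2 A Q)"] by simp
  moreover have "hc A (id2 A \<kappa>) \<gamma> = hc A mate (id2 A h)"
    using whisker_exchange[of \<gamma> \<theta>] whisker_right_reassoc[OF \<theta>_d1, of h]
      whisker_right_reassoc[OF \<theta>_d0, of h] whisker_left_reassoc[OF desc_objD(8)[OF assms], of d1]
    by simp
  ultimately show ?thesis
    by simp
qed

abbreviation "T \<equiv> cmp A p l"
abbreviation "M \<equiv> hc A (hc A (id2 A p) \<epsilon>) (id2 A l)"

definition to_alg where "to_alg = (\<lambda>(h, \<gamma>). (h, hc A (id2 A r) \<gamma>))"

definition to_desc where "to_desc = (\<lambda>(h, \<beta>). (h, vc A (hc A (id2 A d0) \<beta>) (hc A mate (id2 A h))))"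

lemma to_alg_in:
  assumes X: "(h, \<gamma>) \<in> desc_obj A p K y"
  shows "to_alg (h, \<gamma>) \<in> em_obj A T M \<eta> y"
proof -
  note [simp] = desc_objD(1-6)[OF X]
  note decomposition = descent_datum_decomposition[OF X]
  \<comment> \<open>the unit law comes from whiskering by \<open>s\<^sub>0\<close>, the associativity law from whiskering by \<open>Q\<^sub>2\<close>\<close>
  have "vc A (hc A (id2 A r) \<gamma>) (hc A \<eta> (id2 A h)) = id2 A h"
    using arg_cong[OF decomposition, of "hc A (id2 A s0)"] desc_objD(8)[OF X] by simp
  moreover have "vc A (hc A (id2 A r) \<gamma>) (hc A (id2 A T) (hc A (id2 A r) \<gamma>))
      = hc A (id2 A (cmp A Q2 D1)) \<gamma>"
    using arg_cong[OF desc_objD(7)[OF X], of "hc A (id2 A Q2)"] by simp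
  moreover have "hc A (id2 A (cmp A Q2 D1)) \<gamma> = vc A (hc A (id2 A r) \<gamma>) (hc A M (id2 A h))"
    using arg_cong[OF decomposition, of "hc A (id2 A (cmp A Q2 D1))"] by simp
  ultimately show ?thesis
    unfolding em_obj_def to_alg_def by (auto intro!: homI cellsI)
qed

lemma to_desc_in:
  assumes X: "(h, \<beta>) \<in> em_obj A T M \<eta> y"
  shows "to_desc (h, \<beta>) \<in> desc_obj A p K y"
proof -
  note [simp] = em_objD(1-6)[OF X]
  have "hc A (id2 A s0) (vc A (hc A (id2 A d0) \<beta>) (hc A mate (id2 A h))) = id2 A h"
    using em_objD(8)[OF X] by simp
  moreover
  note exchange = arg_cong[OF whisker_exchange[of \<beta> mate], of "hc A (id2 A D0)", simplified]
  note mult = arg_cong[OF em_objD(7)[OF X], of "hc A (id2 A (cmp A D0 d0))", simplified]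
  have "vc A (hc A (id2 A D0) (vc A (hc A (id2 A d0) \<beta>) (hc A mate (id2 A h))))
          (hc A (id2 A D2) (vc A (hc A (id2 A d0) \<beta>) (hc A mate (id2 A h))))
      = hc A (id2 A D1) (vc A (hc A (id2 A d0) \<beta>) (hc A mate (id2 A h)))"
    by (simp add: vc_reassoc[OF exchange[symmetric]] vc_reassoc[OF mult] D1_mate)
  ultimately show ?thesis
    unfolding desc_obj_def to_desc_def by (auto intro!: homI cellsI)
qed

lemma to_alg_to_desc: "X \<in> em_obj A T M \<eta> y \<Longrightarrow> to_alg (to_desc X) = X"
  unfolding to_alg_def to_desc_def by (cases X) (simp add: em_objD(1-6))

lemma to_desc_to_alg: "X \<in> desc_obj A p K y \<Longrightarrow> to_desc (to_alg X) = X"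
proof (cases X)
  case (Pair h \<gamma>)
  assume X: "X \<in> desc_obj A p K y"
  have "vc A (hc A (id2 A d0) (hc A (id2 A r) \<gamma>)) (hc A mate (id2 A h)) = \<gamma>"
    using descent_datum_decomposition[OF X[unfolded Pair]] desc_objD(1-6)[OF X[unfolded Pair]]
    by simp
  then show ?thesis
    unfolding Pair to_alg_def to_desc_def by simp
qed

lemma bij_to_alg: "bij_betw to_alg (desc_obj A p K y) (em_obj A T M \<eta> y)"
  by (rule bij_betw_byWitness[where f'=to_desc])
    (auto simp: to_desc_to_alg to_alg_to_desc to_alg_in to_desc_in)

lemma bij_to_desc: "bij_betw to_desc (em_obj A T M \<eta> y) (desc_obj A p K y)"
  by (rule bij_betw_byWitness[where f'=to_alg])
    (auto simp: to_desc_to_alg to_alg_to_desc to_alg_in to_desc_in)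

lemma descent_morphism_iff_algebra_morphism:
  assumes X1: "(h1, \<gamma>1) \<in> desc_obj A p K y" and X0: "(h0, \<gamma>0) \<in> desc_obj A p K y"
    and \<xi>: "\<xi> \<in> cells A h1 h0"
  shows "vc A \<gamma>0 (hc A (id2 A d1) \<xi>) = vc A (hc A (id2 A d0) \<xi>) \<gamma>1 \<longleftrightarrow>
         vc A \<xi> (hc A (id2 A r) \<gamma>1) = vc A (hc A (id2 A r) \<gamma>0) (hc A (id2 A T) \<xi>)"
proof
  note [simp] = desc_objD(1-6)[OF X1] desc_objD(1-6)[OF X0] cellsD[OF \<xi>]
  assume "vc A \<gamma>0 (hc A (id2 A d1) \<xi>) = vc A (hc A (id2 A d0) \<xi>) \<gamma>1"
  from arg_cong[OF this, of "hc A (id2 A r)"]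
  show "vc A \<xi> (hc A (id2 A r) \<gamma>1) = vc A (hc A (id2 A r) \<gamma>0) (hc A (id2 A T) \<xi>)"
    by simp
next
  note [simp] = desc_objD(1-6)[OF X1] desc_objD(1-6)[OF X0] cellsD[OF \<xi>]
  assume "vc A \<xi> (hc A (id2 A r) \<gamma>1) = vc A (hc A (id2 A r) \<gamma>0) (hc A (id2 A T) \<xi>)"
  note algebra_eq = arg_cong[OF this, of "hc A (id2 A d0)", simplified]
  have "vc A \<gamma>0 (hc A (id2 A d1) \<xi>)
      = vc A (vc A (hc A (id2 A (cmp A d0 r)) \<gamma>0) (hc A mate (id2 A h0))) (hc A (id2 A d1) \<xi>)"
    using arg_cong[OF descent_datum_decomposition[OF X0], of "\<lambda>g. vc A g (hc A (id2 A d1) \<xi>)"]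
    by simp
  also have "\<dots> = vc A (hc A (id2 A d0) \<xi>)
      (vc A (hc A (id2 A (cmp A d0 r)) \<gamma>1) (hc A mate (id2 A h1)))"
    by (simp add: whisker_exchange[of \<xi> mate, simplified, symmetric]
        vc_reassoc[OF algebra_eq[symmetric]])
  also have "\<dots> = vc A (hc A (id2 A d0) \<xi>) \<gamma>1"
    using descent_datum_decomposition[OF X1, symmetric] by simp
  finally show "vc A \<gamma>0 (hc A (id2 A d1) \<xi>) = vc A (hc A (id2 A d0) \<xi>) \<gamma>1" .
qed

lemma em_hom_to_alg:
  assumes "X1 \<in> desc_obj A p K y" "X0 \<in> desc_obj A p K y"
  shows "em_hom A T (to_alg X1) (to_alg X0) = desc_hom A K X1 X0"
  using assms descent_morphism_iff_algebra_morphism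
  unfolding to_alg_def desc_hom_def em_hom_def by (cases X1; cases X0) auto

lemma desc_hom_to_desc:
  assumes "X1 \<in> em_obj A T M \<eta> y" "X0 \<in> em_obj A T M \<eta> y"
  shows "desc_hom A K (to_desc X1) (to_desc X0) = em_hom A T X1 X0"
  using em_hom_to_alg[OF to_desc_in to_desc_in] assms
  by (cases X1; cases X0) (simp add: to_alg_to_desc)

lemma lax_descent_object_EM_object:
  assumes D: "is_lax_descent_object A p K L d \<Psi>"
  shows "is_EM_object A T M \<eta> L d (hc A (id2 A r) \<Psi>)"
proof -
  note [simp] = lax_descent_objectD[OF D]
  have "cat_iso (hom A y L) (cells A) (vc A) (id2 A)
        (em_obj A T M \<eta> y) (em_hom A T) (vc A) (\<lambda>(h, \<beta>). id2 A h)
        (\<lambda>g. (cmp A d g, hc A (hc A (id2 A r) \<Psi>) (id2 A g))) (\<lambda>\<xi>. hc A (id2 A d) \<xi>)"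
    if y: "y \<in> Ob A" for y
  proof (rule cat_iso_comp_bij[OF lax_descent_object_cat_iso[OF D y] bij_to_alg])
    show "em_hom A T (to_alg x) (to_alg x') = desc_hom A K x x'"
      if "x \<in> desc_obj A p K y" "x' \<in> desc_obj A p K y" for x x'
      using em_hom_to_alg[OF that] .
  qed (auto simp: to_alg_def dest!: homD split: prod.splits)
  then show ?thesis
    unfolding is_EM_object_def by (auto intro!: homI cellsI)
qed

lemma EM_object_lax_descent_object:
  assumes E: "is_EM_object A T M \<eta> X u \<mu>"
  shows "is_lax_descent_object A p K X u (vc A (hc A (id2 A d0) \<mu>) (hc A mate (id2 A u)))"
proof -
  note [simp] = EM_objectD[OF E]
  have "cat_iso (hom A y X) (cells A) (vc A) (id2 A)
        (desc_obj A p K y) (desc_hom A K) (vc A) (\<lambda>(h, \<beta>). id2 A h)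
        (\<lambda>g. (cmp A u g, hc A (vc A (hc A (id2 A d0) \<mu>) (hc A mate (id2 A u))) (id2 A g)))
        (\<lambda>\<xi>. hc A (id2 A u) \<xi>)"
    if y: "y \<in> Ob A" for y
  proof (rule cat_iso_comp_bij[OF EM_object_cat_iso[OF E y] bij_to_desc])
    show "desc_hom A K (to_desc x) (to_desc x') = em_hom A T x x'"
      if "x \<in> em_obj A T M \<eta> y" "x' \<in> em_obj A T M \<eta> y" for x x'
      using desc_hom_to_desc[OF that] .
  qed (auto simp: to_desc_def dest!: homD split: prod.splits)
  then show ?thesis
    unfolding is_lax_descent_object_def by (auto intro!: homI cellsI)
qed

lemma EM_factorization_of_lax_descent_factorization:
  assumes "is_lax_descent_factorization A p K L d \<Psi> pH"
  shows "is_EM_factorization A l p \<epsilon> \<eta> L d (hc A (id2 A r) \<Psi>) pH"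
proof -
  have D: "is_lax_descent_object A p K L d \<Psi>" and pH: "pH \<in> hom A e L"
    and "cmp A d pH = p" and \<Psi>pH: "hc A \<Psi> (id2 A pH) = al"
    using assms unfolding is_lax_descent_factorization_def by auto
  note [simp] = lax_descent_objectD[OF D]
  have [simp]: "pH \<in> Ar A" "dm A pH = e" "cd A pH = L"
    using pH by (auto dest: homD)
  have "hc A (hc A (id2 A r) \<Psi>) (id2 A pH) = hc A (id2 A r) (hc A \<Psi> (id2 A pH))"
    by simp
  also have "\<dots> = hc A (id2 A p) \<epsilon>"
    by (simp add: \<Psi>pH)
  finally show ?thesis
    unfolding is_EM_factorization_def using lax_descent_object_EM_object[OF D] pH \<open>cmp A d pH = p\<close>
    by simp
qed

lemma lax_descent_factorization_of_EM_factorization: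
  assumes "is_EM_factorization A l p \<epsilon> \<eta> X u \<mu> k"
  shows "is_lax_descent_factorization A p K X u (vc A (hc A (id2 A d0) \<mu>) (hc A mate (id2 A u))) k"
proof -
  have E: "is_EM_object A T M \<eta> X u \<mu>" and k: "k \<in> hom A e X"
    and uk: "cmp A u k = p" and \<mu>k: "hc A \<mu> (id2 A k) = hc A (id2 A p) \<epsilon>"
    using assms unfolding is_EM_factorization_def by auto
  note [simp] = EM_objectD[OF E]
  have [simp]: "k \<in> Ar A" "dm A k = e" "cd A k = X"
    using k by (auto dest: homD)
  have "hc A (hc A (id2 A d0) \<mu>) (id2 A k) = hc A (id2 A d0) (hc A \<mu> (id2 A k))"
    by simp
  also have "\<dots> = hc A (id2 A (cmp A d0 p)) \<epsilon>"
    by (simp add: \<mu>k)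
  finally have "hc A (vc A (hc A (id2 A d0) \<mu>) (hc A mate (id2 A u))) (id2 A k) = al"
    using alpha_from_mate by (simp add: uk)
  then show ?thesis
    unfolding is_lax_descent_factorization_def using EM_object_lax_descent_object[OF E] k uk
    by simp
qed

lemma desc_EM_agree_right_adjoint: "desc_EM_agree A A l p \<epsilon> \<eta> K"
proof -
  have "iso_factorizations A L d pH X u k"
    if D: "is_lax_descent_factorization A p K L d \<Psi> pH"
      and E: "is_EM_factorization A l p \<epsilon> \<eta> X u \<mu> k" for L d \<Psi> pH X u \<mu> k
  proof -
    have "is_EM_object A T M \<eta> X u \<mu>" "k \<in> hom A e X" "cmp A u k = p"
      "hc A \<mu> (id2 A k) = hc A (id2 A p) \<epsilon>"
      using E unfolding is_EM_factorization_def by auto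
    moreover have "is_EM_object A T M \<eta> L d (hc A (id2 A r) \<Psi>)" "pH \<in> hom A e L" "cmp A d pH = p"
      "hc A (hc A (id2 A r) \<Psi>) (id2 A pH) = hc A (id2 A p) \<epsilon>"
      using EM_factorization_of_lax_descent_factorization[OF D]
      unfolding is_EM_factorization_def by auto
    ultimately show ?thesis
      by (intro EM_factorizations_iso[where t = T and z = e]) auto
  qed
  then show ?thesis
    unfolding desc_EM_agree_def
    using EM_factorization_of_lax_descent_factorization lax_descent_factorization_of_EM_factorization
    by blast
qed

end

lemma (in twocategory) desc_EM_agree_of_adjunction:
  assumes adj: "is_adjunction A b e l p \<epsilon> \<eta>" and ck: "is_cokernel_diagram A p K"
  shows "desc_EM_agree A A l p \<epsilon> \<eta> K"
proof -
  interpret adjunction_cokernel A b e l p \<epsilon> \<eta> K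
    by unfold_locales (rule adj, rule ck)
  obtain r where r: "r \<in> hom A C b" "cmp A r d0 = idn A b" "cmp A r d1 = cmp A p l"
      "hc A (id2 A r) al = hc A (id2 A p) \<epsilon>"
    using ex_r by blast
  obtain \<kappa> where \<kappa>: "\<kappa> \<in> hom A C C" "cmp A \<kappa> d0 = cmp A (cmp A d0 p) l" "cmp A \<kappa> d1 = d1"
      "hc A (id2 A \<kappa>) al = hc A mate (id2 A p)"
    using ex_kappa by blast
  obtain \<theta> where \<theta>: "\<theta> \<in> cells A (cmp A d1 s0) \<kappa>" "hc A \<theta> (id2 A d0) = mate"
      "hc A \<theta> (id2 A d1) = id2 A d1"
    using ex_theta[OF \<kappa>] by blast
  obtain Q where Q: "Q \<in> hom A P C" "cmp A Q D2 = \<kappa>" "cmp A Q D0 = cmp A d0 r"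
      "cmp A Q D1 = idn A C"
    using ex_Q[OF r \<kappa>] by blast
  obtain Q2 where Q2: "Q2 \<in> hom A P b" "cmp A Q2 D2 = cmp A (cmp A p l) r" "cmp A Q2 D0 = r"
    using ex_Q2[OF r(1-3)] by blast
  interpret comparison_cells A b e l p \<epsilon> \<eta> K r \<kappa> \<theta> Q Q2
    by unfold_locales (fact r \<kappa> \<theta> Q Q2)+
  show ?thesis
    by (rule desc_EM_agree_right_adjoint)
qed


section \<open>Duality\<close>

lemma op2_simps[simp]:
  "Ob (op2 A) = Ob A" "Ar (op2 A) = Ar A" "Cl (op2 A) = Cl A" "dm (op2 A) = cd A" "cd (op2 A) = dm A"
  "cmp (op2 A) g f = cmp A f g" "idn (op2 A) = idn A" "s2 (op2 A) = s2 A" "t2 (op2 A) = t2 A"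
  "vc (op2 A) = vc A" "hc (op2 A) \<beta> \<alpha> = hc A \<alpha> \<beta>" "id2 (op2 A) = id2 A"
  by (simp_all add: op2_def)

lemma co2_simps[simp]:
  "Ob (co2 A) = Ob A" "Ar (co2 A) = Ar A" "Cl (co2 A) = Cl A" "dm (co2 A) = dm A" "cd (co2 A) = cd A"
  "cmp (co2 A) = cmp A" "idn (co2 A) = idn A" "s2 (co2 A) = t2 A" "t2 (co2 A) = s2 A"
  "vc (co2 A) \<beta> \<alpha> = vc A \<alpha> \<beta>" "hc (co2 A) = hc A" "id2 (co2 A) = id2 A"
  by (simp_all add: co2_def)

lemma hom_op2: "hom (op2 A) x y = hom A y x"
  by (auto simp: hom_def)

lemma hom_co2[simp]: "hom (co2 A) = hom A"
  by (auto simp: hom_def fun_eq_iff)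

lemma cells_op2[simp]: "cells (op2 A) = cells A"
  by (auto simp: cells_def fun_eq_iff)

lemma cells_co2: "cells (co2 A) f g = cells A g f"
  by (auto simp: cells_def)

lemma cells_co2_eq: "cells (co2 A) = (\<lambda>f g. cells A g f)"
  by (simp add: fun_eq_iff cells_co2)

lemma vc_co2_eq: "vc (co2 A) = (\<lambda>\<beta> \<alpha>. vc A \<alpha> \<beta>)"
  by (simp add: fun_eq_iff)

lemma co2_co2[simp]: "co2 (co2 A) = A"
  by (simp add: co2_def)

lemma co2_op2: "co2 (op2 A) = coop2 A"
  by (simp add: co2_def op2_def coop2_def)

context twocategory
begin

lemma twocat_op2: "twocat (op2 A)"
  unfolding twocat_def hom_op2 cells_op2
  using interchange by (simp add: hom_def cells_def dm_Ob cd_Ob)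

lemma interchange_co2:
  assumes "\<alpha> \<in> Cl A" "\<alpha>' \<in> Cl A" "\<beta> \<in> Cl A" "\<beta>' \<in> Cl A"
    and "t2 A \<alpha>' = s2 A \<alpha>" "t2 A \<beta>' = s2 A \<beta>" "dm A (s2 A \<beta>) = cd A (s2 A \<alpha>)"
  shows "hc A (vc A \<beta> \<beta>') (vc A \<alpha> \<alpha>') = vc A (hc A \<beta> \<alpha>) (hc A \<beta>' \<alpha>')"
proof -
  have "dm A (s2 A \<beta>') = cd A (s2 A \<alpha>')"
    using assms dm_t2[of \<beta>'] cd_t2[of \<alpha>'] by simp
  then show ?thesis
    using assms by (intro interchange) simp_all
qed

lemma twocat_co2: "twocat (co2 A)"
  unfolding twocat_def hom_co2
  using interchange_co2 by (simp add: hom_def cells_co2 cells_def dm_Ob cd_Ob)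

end

lemma is_adjunction_op2: "is_adjunction A b e l p \<epsilon> \<eta> \<Longrightarrow> is_adjunction (op2 A) b e p l \<epsilon> \<eta>"
  unfolding is_adjunction_def by (simp add: hom_op2)

lemma is_adjunction_co2: "is_adjunction A b e l p \<epsilon> \<eta> \<Longrightarrow> is_adjunction (co2 A) e b p l \<eta> \<epsilon>"
  unfolding is_adjunction_def by (simp add: cells_co2)

lemma is_adjunction_coop2: "is_adjunction A b e l p \<epsilon> \<eta> \<Longrightarrow> is_adjunction (coop2 A) e b l p \<eta> \<epsilon>"
  unfolding is_adjunction_def coop2_def by (simp add: cells_co2 hom_op2)

text \<open>Reversing 2-cells turns an opcomma object \<open>(\<delta>\<^sub>0, \<delta>\<^sub>1, \<alpha>)\<close> into \<open>(\<delta>\<^sub>1, \<delta>\<^sub>0, \<alpha>)\<close> and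
  a pushout \<open>(D\<^sub>2, D\<^sub>0)\<close> into \<open>(D\<^sub>0, D\<^sub>2)\<close>, so a cokernel diagram of \<open>p\<close> in \<open>\<A>\<close> with these
  components swapped is one in \<open>\<A>\<^sup>c\<^sup>o\<close>.\<close>

definition ckdiag_swap :: "('o, 'a, 'c) ckdiag \<Rightarrow> ('o, 'a, 'c) ckdiag" where
  "ckdiag_swap K = K\<lparr>ck_d0 := ck_d1 K, ck_d1 := ck_d0 K, ck_D0 := ck_D2 K, ck_D2 := ck_D0 K\<rparr>"

lemma ckdiag_swap_simps[simp]:
  "ck_C (ckdiag_swap K) = ck_C K" "ck_d0 (ckdiag_swap K) = ck_d1 K" "ck_d1 (ckdiag_swap K) = ck_d0 K"
  "ck_al (ckdiag_swap K) = ck_al K" "ck_P (ckdiag_swap K) = ck_P K" "ck_D0 (ckdiag_swap K) = ck_D2 K"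
  "ck_D1 (ckdiag_swap K) = ck_D1 K" "ck_D2 (ckdiag_swap K) = ck_D0 K" "ck_s0 (ckdiag_swap K) = ck_s0 K"
  by (simp_all add: ckdiag_swap_def)

lemma ckdiag_swap_swap[simp]: "ckdiag_swap (ckdiag_swap K) = K"
  by (simp add: ckdiag_swap_def)

lemma bij_betw_swap_pair: "(\<And>a b. (a, b) \<in> T \<longleftrightarrow> (b, a) \<in> S) \<Longrightarrow> bij_betw (\<lambda>(a, b). (b, a)) S T"
  by (rule bij_betw_byWitness[where f'="\<lambda>(a, b). (b, a)"]) auto

lemma bij_betw_swap_triple:
  "(\<And>a b c. (a, b, c) \<in> T \<longleftrightarrow> (b, a, c) \<in> S) \<Longrightarrow> bij_betw (\<lambda>(a, b, c). (b, a, c)) S T"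
  by (rule bij_betw_byWitness[where f'="\<lambda>(a, b, c). (b, a, c)"]) auto

lemma is_opcomma_co2:
  assumes "is_opcomma B p C d0 d1 al"
  shows "is_opcomma (co2 B) p C d1 d0 al"
proof -
  have "cat_iso (hom B C y) (\<lambda>x x'. cells B x' x) (\<lambda>m' m. vc B m m') (id2 B) (oc_obj (co2 B) p y)
          (oc_hom (co2 B) p) (pair_vc (co2 B)) (\<lambda>(h0, h1, \<beta>). (id2 B h0, id2 B h1))
          (\<lambda>h. (cmp B h d1, cmp B h d0, hc B (id2 B h) al))
          (\<lambda>\<xi>. (hc B \<xi> (id2 B d1), hc B \<xi> (id2 B d0)))" if y: "y \<in> Ob B" for y
  proof (rule cat_iso_opposite[where \<sigma> = "\<lambda>(a, b, c). (b, a, c)" and \<tau> = "\<lambda>(a, b). (b, a)"])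
    show "cat_iso (hom B C y) (cells B) (vc B) (id2 B) (oc_obj B p y)
          (oc_hom B p) (pair_vc B) (\<lambda>(h0, h1, \<beta>). (id2 B h0, id2 B h1))
          (\<lambda>h. (cmp B h d0, cmp B h d1, hc B (id2 B h) al))
          (\<lambda>\<xi>. (hc B \<xi> (id2 B d0), hc B \<xi> (id2 B d1)))"
      using assms y unfolding is_opcomma_def by blast
    show "bij_betw (\<lambda>(a, b, c). (b, a, c)) (oc_obj B p y) (oc_obj (co2 B) p y)"
      by (rule bij_betw_swap_triple) (auto simp: oc_obj_def cells_co2)
    show "bij_betw (\<lambda>(a, b). (b, a)) (oc_hom B p x' x)
        (oc_hom (co2 B) p ((\<lambda>(a, b, c). (b, a, c)) x) ((\<lambda>(a, b, c). (b, a, c)) x'))" for x x'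
      by (rule bij_betw_swap_pair) (auto simp: oc_hom_def cells_co2 split: prod.splits)
  qed (auto simp: pair_vc_def split: prod.splits)
  then show ?thesis
    using assms unfolding is_opcomma_def by (simp add: cells_co2_eq vc_co2_eq cells_co2)
qed

lemma is_pushout2_co2:
  assumes "is_pushout2 B d0 d1 P D2 D0"
  shows "is_pushout2 (co2 B) d1 d0 P D0 D2"
proof -
  have "cat_iso (hom B P y) (\<lambda>x x'. cells B x' x) (\<lambda>m' m. vc B m m') (id2 B) (po_obj (co2 B) d1 d0 y)
          (po_hom (co2 B) d1 d0) (pair_vc (co2 B)) (\<lambda>(k0, k1). (id2 B k0, id2 B k1))
          (\<lambda>k. (cmp B k D0, cmp B k D2))
          (\<lambda>\<xi>. (hc B \<xi> (id2 B D0), hc B \<xi> (id2 B D2)))" if y: "y \<in> Ob B" for y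
  proof (rule cat_iso_opposite[where \<sigma> = "\<lambda>(a, b). (b, a)" and \<tau> = "\<lambda>(a, b). (b, a)"])
    show "cat_iso (hom B P y) (cells B) (vc B) (id2 B) (po_obj B d0 d1 y)
          (po_hom B d0 d1) (pair_vc B) (\<lambda>(k0, k1). (id2 B k0, id2 B k1))
          (\<lambda>k. (cmp B k D2, cmp B k D0))
          (\<lambda>\<xi>. (hc B \<xi> (id2 B D2), hc B \<xi> (id2 B D0)))"
      using assms y unfolding is_pushout2_def by blast
    show "bij_betw (\<lambda>(a, b). (b, a)) (po_obj B d0 d1 y) (po_obj (co2 B) d1 d0 y)"
      by (rule bij_betw_swap_pair) (auto simp: po_obj_def)
    show "bij_betw (\<lambda>(a, b). (b, a)) (po_hom B d0 d1 x' x)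
        (po_hom (co2 B) d1 d0 ((\<lambda>(a, b). (b, a)) x) ((\<lambda>(a, b). (b, a)) x'))" for x x'
      by (rule bij_betw_swap_pair) (auto simp: po_hom_def cells_co2 split: prod.splits)
  qed (auto simp: pair_vc_def split: prod.splits)
  then show ?thesis
    using assms unfolding is_pushout2_def by (simp add: cells_co2_eq vc_co2_eq)
qed

lemma is_cokernel_diagram_co2:
  "is_cokernel_diagram B p K \<Longrightarrow> is_cokernel_diagram (co2 B) p (ckdiag_swap K)"
  unfolding is_cokernel_diagram_def
  using is_opcomma_co2 is_pushout2_co2 by (auto simp: cells_co2)

lemma desc_obj_co2: "desc_obj (co2 B) p (ckdiag_swap K) y = desc_obj B p K y"
  unfolding desc_obj_def by (simp add: cells_co2)

lemma desc_hom_co2: "desc_hom (co2 B) (ckdiag_swap K) = (\<lambda>x x'. desc_hom B K x' x)"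
  unfolding desc_hom_def by (auto simp: fun_eq_iff cells_co2 split: prod.splits)

lemma is_lax_descent_object_co2_if:
  assumes "is_lax_descent_object B p K L d \<Psi>"
  shows "is_lax_descent_object (co2 B) p (ckdiag_swap K) L d \<Psi>"
proof -
  have "cat_iso (hom B y L) (\<lambda>x x'. cells B x' x) (\<lambda>m' m. vc B m m') (id2 B)
        (desc_obj B p K y) (\<lambda>x x'. desc_hom B K x' x) (\<lambda>m' m. vc B m m') (\<lambda>(h, \<beta>). id2 B h)
        (\<lambda>g. (cmp B d g, hc B \<Psi> (id2 B g))) (\<lambda>\<xi>. hc B (id2 B d) \<xi>)" if y: "y \<in> Ob B" for y
  proof (rule cat_iso_opposite[where \<sigma> = id and \<tau> = id])
    show "cat_iso (hom B y L) (cells B) (vc B) (id2 B) (desc_obj B p K y) (desc_hom B K) (vc B)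
        (\<lambda>(h, \<beta>). id2 B h) (\<lambda>g. (cmp B d g, hc B \<Psi> (id2 B g))) (\<lambda>\<xi>. hc B (id2 B d) \<xi>)"
      using lax_descent_object_cat_iso[OF assms y] .
  qed auto
  then show ?thesis
    using assms unfolding is_lax_descent_object_def
    by (simp add: desc_obj_co2 desc_hom_co2 cells_co2_eq vc_co2_eq cells_co2)
qed

lemma is_lax_descent_object_co2:
  "is_lax_descent_object (co2 B) p (ckdiag_swap K) L d \<Psi> \<longleftrightarrow> is_lax_descent_object B p K L d \<Psi>"
  using is_lax_descent_object_co2_if[of "co2 B" p "ckdiag_swap K"]
    is_lax_descent_object_co2_if[of B p K]
  by auto

lemma is_lax_descent_factorization_co2:
  "is_lax_descent_factorization (co2 B) p (ckdiag_swap K) L d \<Psi> pH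
   \<longleftrightarrow> is_lax_descent_factorization B p K L d \<Psi> pH"
  unfolding is_lax_descent_factorization_def is_lax_descent_object_co2 by simp

lemma iso_factorizations_co2: "iso_factorizations (co2 B) = iso_factorizations B"
  by (simp add: fun_eq_iff iso_factorizations_def)

lemma desc_EM_agree_co2:
  "desc_EM_agree (co2 B) Bm l p \<epsilon> \<eta> (ckdiag_swap K) = desc_EM_agree B Bm l p \<epsilon> \<eta> K"
  unfolding desc_EM_agree_def is_lax_descent_factorization_co2 iso_factorizations_co2 ..

lemma (in twocategory) desc_co_EM_agree_of_adjunction:
  assumes "is_adjunction (co2 A) b e l p \<epsilon> \<eta>" "is_cokernel_diagram A p K"
  shows "desc_EM_agree A (co2 A) l p \<epsilon> \<eta> K"
proof -
  interpret co: twocategory "co2 A"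
    by unfold_locales (rule twocat_co2)
  show ?thesis
    using co.desc_EM_agree_of_adjunction[OF assms(1) is_cokernel_diagram_co2[OF assms(2)]]
    by (simp only: desc_EM_agree_co2)
qed

theorem theorem4p11:
  fixes A :: "('o, 'a, 'c) twocat"
    and b e :: 'o and l p :: 'a and \<epsilon> \<eta> :: 'c
    and K1 K2 K3 K4 :: "('o, 'a, 'c) ckdiag"
  assumes "twocat A"
    and "is_adjunction A b e l p \<epsilon> \<eta>"
  shows "(is_cokernel_diagram A p K1 \<longrightarrow> desc_EM_agree A A l p \<epsilon> \<eta> K1)
       \<and> (is_cokernel_diagram (op2 A) l K2 \<longrightarrow> desc_EM_agree (op2 A) (op2 A) p l \<epsilon> \<eta> K2)
       \<and> (is_cokernel_diagram A l K3 \<longrightarrow> desc_EM_agree A (co2 A) p l \<eta> \<epsilon> K3)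
       \<and> (is_cokernel_diagram (op2 A) p K4 \<longrightarrow> desc_EM_agree (op2 A) (coop2 A) l p \<eta> \<epsilon> K4)"
proof -
  interpret twocategory A
    by unfold_locales (rule assms(1))
  interpret op: twocategory "op2 A"
    by unfold_locales (rule twocat_op2)
  have "is_adjunction (co2 (op2 A)) e b l p \<eta> \<epsilon>"
    using is_adjunction_coop2[OF assms(2)] by (simp only: co2_op2)
  then show ?thesis
    using desc_EM_agree_of_adjunction[OF assms(2)]
      op.desc_EM_agree_of_adjunction[OF is_adjunction_op2[OF assms(2)]]
      desc_co_EM_agree_of_adjunction[OF is_adjunction_co2[OF assms(2)]]
      op.desc_co_EM_agree_of_adjunction
    by (simp add: co2_op2)
qed

end
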